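(* Let $f\colon\mathbb{N}\to\mathbb{N}$ be a growth function and let $K,d$ be positive integers. Then there exist $\varepsilon>0$ and $K'\in\mathbb{N}$ such that the following holds. For any collection $\mathcal{F}_1,\dots,\mathcal{F}_n$ of degree-$d$ factors (over a common $\mathbb{F}_2^m$) with $|\mathcal{F}_i|\le K$ for all $i$, there is a sub-collection $\mathcal{F}_{\pi(1)},\dots,\mathcal{F}_{\pi(w)}$ (distinct indices $\pi(1),\dots,\pi(w)$) of size $w\ge n^{\varepsilon}$ and degree-$d$ factors $\mathcal{G}_1,\dots,\mathcal{G}_w$ such that: (1) for every $i$, $\mathcal{G}_i$ is a refinement of $\mathcal{F}_{\pi(i)}$; (2) for every $i$, $|\mathcal{G}_i|\le K'$; (3) for every $i,j$, the factor $\mathcal{G}_i\cup\mathcal{G}_j$ is $f$-regular; (4) the factors $\mathcal{G}_1,\dots,\mathcal{G}_w$ (viewed as sets of polynomials) form a sunflower.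
   Context: A growth function is a non-decreasing $f\colon\mathbb{N}\to\mathbb{N}$ with $f(r)\ge r$ for all $r$. A degree-$d$ factor is a finite set $\mathcal{F}=\{P_1,\dots,P_K\}$ of polynomials $\mathbb{F}_2^m\to\mathbb{F}_2$ of degree at most $d$; $|\mathcal{F}|=K$ is its dimension. For $P$ not identically zero and $\ell\ge1$, $\operatorname{rank}_{\ell}(P)$ is the smallest positive integer $k$ with $P=\Gamma(Q_1,\dots,Q_k)$ for polynomials $Q_j$ of degree at most $\ell$ and some $\Gamma\colon\mathbb{F}_2^k\to\mathbb{F}_2$. A factor is $r$-regular if for every nonzero $(\lambda_1,\dots,\lambda_K)\in\mathbb{F}_2^K$, $\operatorname{rank}_{\ell-1}(\sum_i\lambda_iP_i)>r$ where $\ell=\max_i\deg(\lambda_iP_i)$; it is $f$-regular if it is $f(K)$-regular; the empty factor is regarded as regular for every parameter. $\mathcal{G}=\{Q_1,\dots,Q_{K'}\}$ refines $\mathcal{F}=\{P_1,\dots,P_K\}$ if there is $\Gamma\colon\mathbb{F}_2^{K'}\to\mathbb{F}_2^K$ with $(P_1,\dots,P_K)=\Gamma(Q_1,\dots,Q_{K'})$ as functions. A collection of (possibly repeated, possibly empty) sets $V_1,\dots,V_w$ is a sunflower if, with $C=\bigcap_iV_i$, one has $V_i\cap V_j=C$ for all $i\ne j$. *)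

theory Defs
  imports Complex_Main "HOL-Library.Extended_Nat"
begin

text \<open>Polynomials F_2^m -> F_2 are represented by their unique multilinear
  (reduced) representation: a finite set of monomials, each monomial being a
  finite set of variable indices. A point of F_2^m is the set of coordinates
  equal to 1, i.e. a subset of {..<m}.\<close>

type_synonym poly2 = "nat set set"

definition wf_poly :: "nat \<Rightarrow> poly2 \<Rightarrow> bool" where
  "wf_poly m P \<longleftrightarrow> finite P \<and> (\<forall>S\<in>P. S \<subseteq> {..<m})"

definition peval :: "poly2 \<Rightarrow> nat set \<Rightarrow> bool" where
  "peval P x \<longleftrightarrow> odd (card {S\<in>P. S \<subseteq> x})"

definition pdeg :: "poly2 \<Rightarrow> nat" where
  "pdeg P = Max (insert 0 (card ` P))"

definition psum :: "poly2 set \<Rightarrow> poly2" where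
  "psum T = {S. odd (card {P\<in>T. S \<in> P})}"

definition is_factor :: "nat \<Rightarrow> nat \<Rightarrow> poly2 set \<Rightarrow> bool" where
  "is_factor m d F \<longleftrightarrow> finite F \<and> (\<forall>P\<in>F. wf_poly m P \<and> pdeg P \<le> d)"

definition rank_rep :: "nat \<Rightarrow> nat \<Rightarrow> poly2 \<Rightarrow> nat \<Rightarrow> bool" where
  "rank_rep m l P k \<longleftrightarrow> (\<exists>Qs :: poly2 list. \<exists>\<Gamma> :: bool list \<Rightarrow> bool.
      length Qs = k \<and> (\<forall>Q\<in>set Qs. wf_poly m Q \<and> pdeg Q \<le> l) \<and>
      (\<forall>x. x \<subseteq> {..<m} \<longrightarrow> peval P x = \<Gamma> (map (\<lambda>Q. peval Q x) Qs)))"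

definition prank :: "nat \<Rightarrow> nat \<Rightarrow> poly2 \<Rightarrow> enat" where
  "prank m l P = (if \<exists>k>0. rank_rep m l P k
                  then enat (LEAST k. k > 0 \<and> rank_rep m l P k) else \<infinity>)"

definition r_regular :: "nat \<Rightarrow> nat \<Rightarrow> poly2 set \<Rightarrow> bool" where
  "r_regular m r F \<longleftrightarrow> (\<forall>T. T \<subseteq> F \<and> T \<noteq> {} \<longrightarrow>
      prank m (Max (pdeg ` T) - 1) (psum T) > enat r)"

definition f_regular :: "nat \<Rightarrow> (nat \<Rightarrow> nat) \<Rightarrow> poly2 set \<Rightarrow> bool" where
  "f_regular m f F \<longleftrightarrow> r_regular m (f (card F)) F"

definition growth_function :: "(nat \<Rightarrow> nat) \<Rightarrow> bool" where
  "growth_function f \<longleftrightarrow> mono f \<and> (\<forall>r. r \<le> f r)"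

definition refines :: "nat \<Rightarrow> poly2 set \<Rightarrow> poly2 set \<Rightarrow> bool" where
  "refines m G F \<longleftrightarrow> (\<exists>\<Gamma> :: (poly2 \<Rightarrow> bool) \<Rightarrow> (poly2 \<Rightarrow> bool).
      \<forall>x. x \<subseteq> {..<m} \<longrightarrow>
        (\<forall>P\<in>F. peval P x = \<Gamma> (\<lambda>Q. if Q \<in> G then peval Q x else False) P))"

definition sunflower :: "nat \<Rightarrow> (nat \<Rightarrow> 'a set) \<Rightarrow> bool" where
  "sunflower w V \<longleftrightarrow> (\<forall>i<w. \<forall>j<w. i \<noteq> j \<longrightarrow> V i \<inter> V j = (\<Inter>k\<in>{..<w}. V k))"

end

(* Each refinement has the form C \<union> H i with a common core C and pairwise disjoint petals H i.
   A low-rank combination involving the core and at most two petals is removed by replacing its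
   polynomial of top degree with a few polynomials of lower degree; this lowers the multiset of
   degrees of the core or of a petal.  Combinations inside the core are removed first, then those
   of the core with one petal if at least half of the petals have one.  Otherwise the combinations
   with two petals form a graph on the remaining petals: a vertex of large degree shares a common
   part of its petal with many neighbours, and this part joins the core; if all degrees are small,
   a greedy independent set of size n^(1/4) carries an f-regular sunflower.  Every round keeps a
   quarter power of the family, decreases the pair (petal profile, core profile) in a well-founded
   order and enlarges sizes only boundedly, so the exponent is 4^-k with k depending only on f, K
   and d. *)

theory Submission
  imports Defs "HOL-Library.Multiset_Order" "HOL-Library.Product_Lexorder"
begin

section \<open>Functions determined by factors\<close>

lemma is_factor_subset: "is_factor m d A \<Longrightarrow> B \<subseteq> A \<Longrightarrow> is_factor m d B"
  unfolding is_factor_def using finite_subset by blast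

lemma is_factor_Un: "is_factor m d A \<Longrightarrow> is_factor m d B \<Longrightarrow> is_factor m d (A \<union> B)"
  unfolding is_factor_def by auto

lemma is_factor_UN:
  "finite I \<Longrightarrow> \<forall>i\<in>I. is_factor m d (H i) \<Longrightarrow> is_factor m d (\<Union>i\<in>I. H i)"
  unfolding is_factor_def by auto

lemma is_factor_finite: "is_factor m d A \<Longrightarrow> finite A"
  unfolding is_factor_def by blast

definition determined :: "nat \<Rightarrow> poly2 set \<Rightarrow> (nat set \<Rightarrow> bool) \<Rightarrow> bool" where
  "determined m A g \<longleftrightarrow> (\<forall>x y. x \<subseteq> {..<m} \<longrightarrow> y \<subseteq> {..<m} \<longrightarrow>
      (\<forall>Q\<in>A. peval Q x = peval Q y) \<longrightarrow> g x = g y)"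

lemma determined_peval: "Q \<in> A \<Longrightarrow> determined m A (peval Q)"
  unfolding determined_def by blast

lemma determined_mono: "A \<subseteq> B \<Longrightarrow> determined m A g \<Longrightarrow> determined m B g"
  unfolding determined_def by blast

lemma determined_trans:
  "determined m A g \<Longrightarrow> \<forall>Q\<in>A. determined m B (peval Q) \<Longrightarrow> determined m B g"
  unfolding determined_def by blast

lemma determined_xor:
  "determined m A g \<Longrightarrow> determined m B h \<Longrightarrow> determined m (A \<union> B) (\<lambda>x. g x \<noteq> h x)"
  unfolding determined_def by (metis Un_iff)

lemma refines_if_determined:
  assumes "\<forall>P\<in>F. determined m G (peval P)"
  shows "refines m G F"
proof -
  define pt where "pt v = (SOME y. y \<subseteq> {..<m} \<and> (\<forall>Q\<in>G. peval Q y = v Q))" for v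
  have pt: "peval P x = peval P (pt (\<lambda>Q. if Q \<in> G then peval Q x else False))"
    if x: "x \<subseteq> {..<m}" and P: "P \<in> F" for x P
  proof -
    define v where "v Q = (if Q \<in> G then peval Q x else False)" for Q
    have "\<exists>y. y \<subseteq> {..<m} \<and> (\<forall>Q\<in>G. peval Q y = v Q)" using x by (auto simp: v_def)
    then have "pt v \<subseteq> {..<m} \<and> (\<forall>Q\<in>G. peval Q (pt v) = v Q)"
      unfolding pt_def by (rule someI_ex)
    then have "pt v \<subseteq> {..<m}" "\<forall>Q\<in>G. peval Q x = peval Q (pt v)" by (auto simp: v_def)
    then have "peval P x = peval P (pt v)" using assms P x unfolding determined_def by blast
    then show ?thesis by (simp add: v_def[abs_def])
  qed
  show ?thesis unfolding refines_def
    by (intro exI[of _ "\<lambda>v P. peval P (pt v)"] allI impI ballI) (rule pt)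
qed

definition parity :: "poly2 set \<Rightarrow> nat set \<Rightarrow> bool" where
  "parity T x \<longleftrightarrow> odd (card {P\<in>T. peval P x})"

lemma determined_parity: "determined m T (parity T)"
  unfolding determined_def parity_def
proof (intro allI impI)
  fix x y assume "\<forall>Q\<in>T. peval Q x = peval Q y"
  then have "{P\<in>T. peval P x} = {P\<in>T. peval P y}" by blast
  then show "odd (card {P\<in>T. peval P x}) = odd (card {P\<in>T. peval P y})" by simp
qed

lemma parity_Un:
  assumes "finite A" "finite B" "A \<inter> B = {}"
  shows "parity (A \<union> B) x \<longleftrightarrow> parity A x \<noteq> parity B x"
proof -
  have "{P\<in>A \<union> B. peval P x} = {P\<in>A. peval P x} \<union> {P\<in>B. peval P x}" by auto
  moreover have "card ({P\<in>A. peval P x} \<union> {P\<in>B. peval P x}) =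
      card {P\<in>A. peval P x} + card {P\<in>B. peval P x}"
    using assms by (intro card_Un_disjoint) auto
  ultimately show ?thesis unfolding parity_def by simp
qed

lemma parity_remove:
  assumes "finite T" "P \<in> T"
  shows "parity T x \<longleftrightarrow> peval P x \<noteq> parity (T - {P}) x"
proof -
  have "{Q\<in>{P}. peval Q x} = (if peval P x then {P} else {})" by auto
  then have "parity {P} x = peval P x" by (simp add: parity_def)
  then show ?thesis using parity_Un[of "{P}" "T - {P}" x] assms by (simp add: insert_absorb)
qed

text \<open>Both sides count, modulo 2, the pairs of a polynomial in \<open>T\<close> and one of its monomials
  that is satisfied by \<open>x\<close>.\<close>

lemma peval_psum:
  assumes "finite T" "\<forall>P\<in>T. finite P"
  shows "peval (psum T) x = parity T x"
proof -
  define U where "U = {S\<in>\<Union>T. S \<subseteq> x}"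
  have fU: "finite U" using assms by (simp add: U_def)
  have "(\<Sum>P\<in>T. card {S\<in>P. S \<subseteq> x}) = (\<Sum>P\<in>T. \<Sum>S\<in>U. of_bool (S \<in> P))"
  proof (rule sum.cong)
    fix P assume "P \<in> T"
    then have "U \<inter> {S. S \<in> P} = {S\<in>P. S \<subseteq> x}" by (auto simp: U_def)
    then show "card {S\<in>P. S \<subseteq> x} = (\<Sum>S\<in>U. of_bool (S \<in> P))" using fU by simp
  qed simp
  also have "\<dots> = (\<Sum>S\<in>U. card {P\<in>T. S \<in> P})"
    using assms(1) by (subst sum.swap) (simp add: Int_def conj_commute)
  finally have sums: "(\<Sum>P\<in>T. card {S\<in>P. S \<subseteq> x}) = (\<Sum>S\<in>U. card {P\<in>T. S \<in> P})" .
  have "{S\<in>psum T. S \<subseteq> x} = {S\<in>U. odd (card {P\<in>T. S \<in> P})}"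
    by (auto simp: psum_def U_def dest: odd_card_imp_not_empty)
  then have "peval (psum T) x \<longleftrightarrow> odd (\<Sum>S\<in>U. card {P\<in>T. S \<in> P})"
    using fU by (simp add: peval_def even_sum_iff)
  also have "\<dots> \<longleftrightarrow> parity T x"
    using assms(1) by (simp add: sums[symmetric] parity_def peval_def even_sum_iff)
  finally show ?thesis .
qed

lemma peval_const_if_pdeg_0:
  assumes "wf_poly m Q" "pdeg Q = 0"
  shows "peval Q x = peval Q y"
proof -
  have "S = {}" if "S \<in> Q" for S
  proof -
    have "card S \<le> pdeg Q"
      using assms(1) that unfolding pdeg_def wf_poly_def by (intro Max_ge) auto
    moreover have "finite S" using assms(1) that by (auto simp: wf_poly_def intro: finite_subset)
    ultimately show "S = {}" using assms(2) by simp
  qed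
  then have "{S\<in>Q. S \<subseteq> x} = {S\<in>Q. S \<subseteq> y}" by auto
  then show ?thesis by (simp add: peval_def)
qed

definition rank_le :: "nat \<Rightarrow> nat \<Rightarrow> (nat set \<Rightarrow> bool) \<Rightarrow> nat \<Rightarrow> bool" where
  "rank_le m l g r \<longleftrightarrow> (\<exists>A. is_factor m l A \<and> card A \<le> r \<and> determined m A g)"

lemma rank_le_mono: "rank_le m l g r \<Longrightarrow> r \<le> r' \<Longrightarrow> rank_le m l g r'"
  unfolding rank_le_def by auto

lemma rank_le_const: "rank_le m l (\<lambda>_. b) r"
  unfolding rank_le_def is_factor_def determined_def by (intro exI[of _ "{}"]) auto

lemma rank_le_if_prank_le:
  assumes "prank m l P \<le> enat r"
  shows "rank_le m l (peval P) r"
proof -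
  have ex: "\<exists>k>0. rank_rep m l P k" using assms by (auto simp: prank_def split: if_splits)
  define k where "k = (LEAST k. k > 0 \<and> rank_rep m l P k)"
  have k: "rank_rep m l P k" unfolding k_def using LeastI_ex[OF ex] by blast
  have "k \<le> r" using assms ex by (simp add: prank_def k_def)
  obtain Qs \<Gamma> where Qs: "length Qs = k" "\<forall>Q\<in>set Qs. wf_poly m Q \<and> pdeg Q \<le> l"
    "\<forall>x. x \<subseteq> {..<m} \<longrightarrow> peval P x = \<Gamma> (map (\<lambda>Q. peval Q x) Qs)"
    using k by (auto simp: rank_rep_def)
  have "map (\<lambda>Q. peval Q x) Qs = map (\<lambda>Q. peval Q y) Qs"
    if "\<forall>Q\<in>set Qs. peval Q x = peval Q y" for x y
    using that by simp
  then have "determined m (set Qs) (peval P)" using Qs(3) unfolding determined_def by metis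
  moreover have "card (set Qs) \<le> r" using Qs(1) \<open>k \<le> r\<close> card_length[of Qs] by linarith
  ultimately show ?thesis using Qs(2) unfolding rank_le_def is_factor_def by blast
qed

lemma rank_le_xor_absorb:
  assumes "rank_le m l (\<lambda>x. g x \<noteq> h x) r" "determined m B h" "is_factor m l B"
  shows "rank_le m l g (r + card B)"
proof -
  obtain A where A: "is_factor m l A" "card A \<le> r" "determined m A (\<lambda>x. g x \<noteq> h x)"
    using assms(1) by (auto simp: rank_le_def)
  have "determined m (A \<union> B) (\<lambda>x. (g x \<noteq> h x) \<noteq> h x)" using A(3) assms(2) by (rule determined_xor)
  moreover have "(\<lambda>x. (g x \<noteq> h x) \<noteq> h x) = g" by auto
  ultimately have "determined m (A \<union> B) g" by simp
  moreover have "card (A \<union> B) \<le> r + card B" using A(2) card_Un_le[of A B] by linarith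
  ultimately show ?thesis using is_factor_Un[OF A(1) assms(3)] unfolding rank_le_def by blast
qed

text \<open>Since \<open>pdeg P - 1\<close> is truncated at \<open>0\<close>, constant witnesses of the rank need not have
  smaller degree than \<open>P\<close>; they are dropped, as they determine nothing.\<close>

lemma determined_by_lower_degree:
  assumes "rank_le m (pdeg P - 1) (\<lambda>x. peval P x \<noteq> h x) r" "determined m B h" "pdeg P \<le> d"
  shows "\<exists>A. is_factor m d A \<and> card A \<le> r \<and> (\<forall>Q\<in>A. pdeg Q < pdeg P) \<and>
    determined m (B \<union> A) (peval P)"
proof -
  obtain A where A: "is_factor m (pdeg P - 1) A" "card A \<le> r"
    "determined m A (\<lambda>x. peval P x \<noteq> h x)"
    using assms(1) by (auto simp: rank_le_def)
  define A' where "A' = {Q\<in>A. 0 < pdeg Q}"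
  have "determined m A' (\<lambda>x. peval P x \<noteq> h x)"
    unfolding determined_def
  proof (intro allI impI)
    fix x y assume xy: "x \<subseteq> {..<m}" "y \<subseteq> {..<m}" "\<forall>Q\<in>A'. peval Q x = peval Q y"
    have "peval Q x = peval Q y" if "Q \<in> A" for Q
    proof (cases "pdeg Q = 0")
      case True
      show ?thesis using A(1) that by (intro peval_const_if_pdeg_0[OF _ True]) (auto simp: is_factor_def)
    next
      case False
      then show ?thesis using xy(3) that by (simp add: A'_def)
    qed
    then show "(peval P x \<noteq> h x) = (peval P y \<noteq> h y)"
      using A(3) xy(1,2) unfolding determined_def by blast
  qed
  from determined_xor[OF this assms(2)] have "determined m (A' \<union> B) (\<lambda>x. (peval P x \<noteq> h x) \<noteq> h x)" .
  moreover have "(\<lambda>x. (peval P x \<noteq> h x) \<noteq> h x) = peval P" by auto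
  ultimately have "determined m (B \<union> A') (peval P)" by (simp add: Un_commute)
  moreover have "card A' \<le> r"
    using A(2) card_mono[OF is_factor_finite[OF A(1)], of A'] by (simp add: A'_def)
  moreover have "is_factor m d A'" "\<forall>Q\<in>A'. pdeg Q < pdeg P"
    using A(1) assms(3) by (auto simp: is_factor_def A'_def)
  ultimately show ?thesis by blast
qed

definition maxdeg :: "poly2 set \<Rightarrow> nat" where
  "maxdeg T = Max (pdeg ` T)"

lemma maxdeg_attained: "finite T \<Longrightarrow> T \<noteq> {} \<Longrightarrow> \<exists>P\<in>T. pdeg P = maxdeg T"
  unfolding maxdeg_def by (metis (mono_tags, lifting) Max_in finite_imageI image_iff image_is_empty)

lemma pdeg_le_maxdeg: "finite T \<Longrightarrow> P \<in> T \<Longrightarrow> pdeg P \<le> maxdeg T"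
  unfolding maxdeg_def by simp

definition deg_profile :: "poly2 set \<Rightarrow> nat multiset" where
  "deg_profile A = image_mset pdeg (mset_set A)"

lemma size_deg_profile: "finite A \<Longrightarrow> size (deg_profile A) = card A"
  unfolding deg_profile_def by simp

definition bounded_msets :: "nat \<Rightarrow> nat \<Rightarrow> nat multiset set" where
  "bounded_msets d k = {M. set_mset M \<subseteq> {..d} \<and> size M \<le> k}"

lemma deg_profile_in_bounded_msets:
  "is_factor m d A \<Longrightarrow> card A \<le> k \<Longrightarrow> deg_profile A \<in> bounded_msets d k"
  unfolding is_factor_def deg_profile_def bounded_msets_def by auto

lemma deg_profile_mono: "finite A \<Longrightarrow> B \<subseteq> A \<Longrightarrow> deg_profile B \<le> deg_profile A"
  unfolding deg_profile_def
  by (intro subset_eq_imp_le_multiset image_mset_subseteq_mono) (simp add: finite_subset)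

lemma deg_profile_replace_less:
  assumes "finite H" "finite A" "P \<in> H" "\<forall>Q\<in>A. pdeg Q < pdeg P" "H' \<subseteq> (H - {P}) \<union> A"
  shows "deg_profile H' < deg_profile H"
proof -
  define B where "B = H' \<inter> H"
  define D where "D = H' - H"
  have fin: "finite B" "finite D" using assms by (auto simp: B_def D_def intro: finite_subset)
  have "H' = B \<union> D" "B \<inter> D = {}" by (auto simp: B_def D_def)
  then have 1: "deg_profile H' = deg_profile B + deg_profile D"
    unfolding deg_profile_def using fin mset_set_Union[of B D] by simp
  have "H = B \<union> (H - B)" by (auto simp: B_def)
  then have 2: "deg_profile H = deg_profile B + deg_profile (H - B)"
    unfolding deg_profile_def using fin assms(1)
    by (metis Diff_disjoint finite_Diff image_mset_union mset_set_Union)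
  have "deg_profile D < deg_profile (H - B)"
    unfolding deg_profile_def using assms fin
    by (intro ex_gt_imp_less_multiset) (auto simp: B_def D_def intro!: exI[of _ "pdeg P"])
  then show ?thesis unfolding 1 2 by simp
qed

lemma finite_bounded_msets: "finite (bounded_msets d k)"
proof -
  have "bounded_msets d k \<subseteq> mset ` {xs. set xs \<subseteq> {..d} \<and> length xs \<le> k}"
  proof
    fix M assume "M \<in> bounded_msets d k"
    moreover obtain xs where "mset xs = M" using ex_mset by blast
    ultimately show "M \<in> mset ` {xs. set xs \<subseteq> {..d} \<and> length xs \<le> k}"
      unfolding bounded_msets_def by auto
  qed
  then show ?thesis by (rule finite_subset) (simp add: finite_lists_length_le)
qed

section \<open>Irregular combinations\<close>

definition irregular :: "nat \<Rightarrow> nat \<Rightarrow> poly2 set \<Rightarrow> bool" where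
  "irregular m r C \<longleftrightarrow> (\<exists>T\<subseteq>C. T \<noteq> {} \<and> rank_le m (maxdeg T - 1) (parity T) r)"

definition irregular_with :: "nat \<Rightarrow> nat \<Rightarrow> poly2 set \<Rightarrow> poly2 set \<Rightarrow> bool" where
  "irregular_with m r C H \<longleftrightarrow>
    (\<exists>S\<subseteq>C. \<exists>T\<subseteq>H. T \<noteq> {} \<and> rank_le m (maxdeg (S \<union> T) - 1) (parity (S \<union> T)) r)"

text \<open>Combining the parities of \<open>T\<^sub>1\<close> and \<open>T\<^sub>2\<close> by exclusive or, rather than taking the parity
  of \<open>T\<^sub>1 \<union> T\<^sub>2\<close>, makes overlapping \<open>H\<^sub>1\<close> and \<open>H\<^sub>2\<close> irregular: a common element \<open>p\<close> gives
  \<open>T\<^sub>1 = T\<^sub>2 = {p}\<close> and a constant function.\<close>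

definition irregular_across :: "nat \<Rightarrow> nat \<Rightarrow> poly2 set \<Rightarrow> poly2 set \<Rightarrow> poly2 set \<Rightarrow> bool" where
  "irregular_across m r C H\<^sub>1 H\<^sub>2 \<longleftrightarrow> (\<exists>S\<subseteq>C. \<exists>T\<^sub>1\<subseteq>H\<^sub>1. \<exists>T\<^sub>2\<subseteq>H\<^sub>2. T\<^sub>1 \<noteq> {} \<and> T\<^sub>2 \<noteq> {} \<and>
      rank_le m (maxdeg (S \<union> T\<^sub>1 \<union> T\<^sub>2) - 1) (\<lambda>x. parity S x \<noteq> (parity T\<^sub>1 x \<noteq> parity T\<^sub>2 x)) r)"

lemma irregular_mono:
  assumes "irregular m r C" "r \<le> r'"
  shows "irregular m r' C"
proof -
  obtain T where T: "T \<subseteq> C" "T \<noteq> {}" "rank_le m (maxdeg T - 1) (parity T) r"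
    using assms(1) unfolding irregular_def by blast
  have "rank_le m (maxdeg T - 1) (parity T) r'" by (rule rank_le_mono[OF T(3) assms(2)])
  then show ?thesis using T(1,2) unfolding irregular_def by blast
qed

lemma irregular_with_mono:
  assumes "irregular_with m r C H" "r \<le> r'"
  shows "irregular_with m r' C H"
proof -
  obtain S T where T: "S \<subseteq> C" "T \<subseteq> H" "T \<noteq> {}"
    "rank_le m (maxdeg (S \<union> T) - 1) (parity (S \<union> T)) r"
    using assms(1) unfolding irregular_with_def by blast
  have "rank_le m (maxdeg (S \<union> T) - 1) (parity (S \<union> T)) r'" by (rule rank_le_mono[OF T(4) assms(2)])
  then show ?thesis using T(1-3) unfolding irregular_with_def by blast
qed

lemma irregular_acrossI:
  assumes "S \<subseteq> C" "T\<^sub>1 \<subseteq> H\<^sub>1" "T\<^sub>2 \<subseteq> H\<^sub>2" "T\<^sub>1 \<noteq> {}" "T\<^sub>2 \<noteq> {}"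
    and "rank_le m (maxdeg (S \<union> T\<^sub>1 \<union> T\<^sub>2) - 1) (\<lambda>x. parity S x \<noteq> (parity T\<^sub>1 x \<noteq> parity T\<^sub>2 x)) r"
  shows "irregular_across m r C H\<^sub>1 H\<^sub>2"
  unfolding irregular_across_def using assms by blast

lemma irregular_across_sym:
  assumes "irregular_across m r C H\<^sub>1 H\<^sub>2"
  shows "irregular_across m r C H\<^sub>2 H\<^sub>1"
proof -
  obtain S T\<^sub>1 T\<^sub>2 where T: "S \<subseteq> C" "T\<^sub>1 \<subseteq> H\<^sub>1" "T\<^sub>2 \<subseteq> H\<^sub>2" "T\<^sub>1 \<noteq> {}" "T\<^sub>2 \<noteq> {}"
    "rank_le m (maxdeg (S \<union> T\<^sub>1 \<union> T\<^sub>2) - 1) (\<lambda>x. parity S x \<noteq> (parity T\<^sub>1 x \<noteq> parity T\<^sub>2 x)) r"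
    using assms unfolding irregular_across_def by blast
  have "S \<union> T\<^sub>2 \<union> T\<^sub>1 = S \<union> T\<^sub>1 \<union> T\<^sub>2"
    "(\<lambda>x. parity S x \<noteq> (parity T\<^sub>2 x \<noteq> parity T\<^sub>1 x)) = (\<lambda>x. parity S x \<noteq> (parity T\<^sub>1 x \<noteq> parity T\<^sub>2 x))"
    by auto
  with T show ?thesis by (intro irregular_acrossI[of S _ T\<^sub>2 _ T\<^sub>1]) simp_all
qed

lemma disjoint_if_not_irregular_across:
  assumes "\<not> irregular_across m r C H\<^sub>1 H\<^sub>2"
  shows "H\<^sub>1 \<inter> H\<^sub>2 = {}"
proof (rule ccontr)
  assume "H\<^sub>1 \<inter> H\<^sub>2 \<noteq> {}"
  then obtain p where p: "p \<in> H\<^sub>1" "p \<in> H\<^sub>2" by blast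
  have "(\<lambda>x. parity {} x \<noteq> (parity {p} x \<noteq> parity {p} x)) = (\<lambda>_. False)"
    by (simp add: parity_def)
  then have "irregular_across m r C H\<^sub>1 H\<^sub>2"
    using p rank_le_const by (intro irregular_acrossI[of "{}" _ "{p}" _ "{p}"]) simp_all
  then show False using assms by blast
qed

lemma peval_psum_eq_parity:
  assumes "is_factor m d G" "T \<subseteq> G"
  shows "peval (psum T) = parity T"
proof
  have "finite T" "\<forall>P\<in>T. finite P"
    using assms is_factor_finite finite_subset by (auto simp: is_factor_def wf_poly_def)
  then show "peval (psum T) x = parity T x" for x by (rule peval_psum)
qed

lemma irregular_if_not_f_regular:
  assumes "is_factor m d G" "\<not> f_regular m f G"
  shows "irregular m (f (card G)) G"
proof -
  obtain T where T: "T \<subseteq> G" "T \<noteq> {}" "prank m (maxdeg T - 1) (psum T) \<le> enat (f (card G))"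
    using assms(2) unfolding f_regular_def r_regular_def maxdeg_def by (auto simp: not_less)
  have "rank_le m (maxdeg T - 1) (parity T) (f (card G))"
    using rank_le_if_prank_le[OF T(3)] peval_psum_eq_parity[OF assms(1) T(1)] by simp
  then show ?thesis using T(1,2) unfolding irregular_def by blast
qed

lemma f_regular_if_not_irregular:
  assumes "is_factor m d G" "f (card G) \<le> r" "\<not> irregular m r G"
  shows "f_regular m f G"
  using irregular_if_not_f_regular[OF assms(1)] irregular_mono assms(2,3) by blast

lemma not_irregular_Un:
  assumes "\<not> irregular m r C" "\<not> irregular_with m r C H"
  shows "\<not> irregular m r (C \<union> H)"
proof
  assume "irregular m r (C \<union> H)"
  then obtain T where T: "T \<subseteq> C \<union> H" "T \<noteq> {}" "rank_le m (maxdeg T - 1) (parity T) r"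
    unfolding irregular_def by blast
  have T_eq: "T = (T \<inter> C) \<union> (T \<inter> H)" using T(1) by blast
  show False
  proof (cases "T \<inter> H = {}")
    case True
    then have "T \<subseteq> C" using T_eq by blast
    then show False using assms(1) T(2,3) unfolding irregular_def by blast
  next
    case False
    have "T \<inter> C \<subseteq> C" "T \<inter> H \<subseteq> H" by auto
    then show False using assms(2) False T(3) T_eq unfolding irregular_with_def by metis
  qed
qed

lemma not_irregular_Un_Un:
  assumes "is_factor m d C" "is_factor m d H\<^sub>1" "is_factor m d H\<^sub>2" "H\<^sub>1 \<inter> C = {}" "H\<^sub>2 \<inter> C = {}"
    and "\<not> irregular m r (C \<union> H\<^sub>1)" "\<not> irregular m r (C \<union> H\<^sub>2)"
    and "\<not> irregular_across m r C H\<^sub>1 H\<^sub>2"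
  shows "\<not> irregular m r (C \<union> H\<^sub>1 \<union> H\<^sub>2)"
proof
  assume "irregular m r (C \<union> H\<^sub>1 \<union> H\<^sub>2)"
  then obtain T where T: "T \<subseteq> C \<union> H\<^sub>1 \<union> H\<^sub>2" "T \<noteq> {}" "rank_le m (maxdeg T - 1) (parity T) r"
    unfolding irregular_def by blast
  consider "T \<subseteq> C \<union> H\<^sub>1" | "T \<subseteq> C \<union> H\<^sub>2" | "T \<inter> H\<^sub>1 \<noteq> {}" "T \<inter> H\<^sub>2 \<noteq> {}"
    using T(1) by blast
  then show False
  proof cases
    case 1
    then show False using assms(6) T(2,3) unfolding irregular_def by blast
  next
    case 2
    then show False using assms(7) T(2,3) unfolding irregular_def by blast
  next
    case 3
    define S T\<^sub>1 T\<^sub>2 where "S = T \<inter> C" "T\<^sub>1 = T \<inter> H\<^sub>1" "T\<^sub>2 = T \<inter> H\<^sub>2"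
    have T_eq: "S \<union> T\<^sub>1 \<union> T\<^sub>2 = T" using T(1) unfolding S_T\<^sub>1_T\<^sub>2_def by blast
    have fin: "finite S" "finite T\<^sub>1" "finite T\<^sub>2"
      using is_factor_finite[OF assms(1)] is_factor_finite[OF assms(2)] is_factor_finite[OF assms(3)]
      unfolding S_T\<^sub>1_T\<^sub>2_def by simp_all
    have disj: "T\<^sub>1 \<inter> T\<^sub>2 = {}" "S \<inter> (T\<^sub>1 \<union> T\<^sub>2) = {}"
      using disjoint_if_not_irregular_across[OF assms(8)] assms(4,5) unfolding S_T\<^sub>1_T\<^sub>2_def by blast+
    have "parity T x \<longleftrightarrow> parity S x \<noteq> (parity T\<^sub>1 x \<noteq> parity T\<^sub>2 x)" for x
      using parity_Un[OF fin(1) _ disj(2)] parity_Un[OF fin(2,3) disj(1)] fin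
      unfolding T_eq[symmetric] Un_assoc by simp
    then have "parity T = (\<lambda>x. parity S x \<noteq> (parity T\<^sub>1 x \<noteq> parity T\<^sub>2 x))" ..
    then have "rank_le m (maxdeg (S \<union> T\<^sub>1 \<union> T\<^sub>2) - 1)
        (\<lambda>x. parity S x \<noteq> (parity T\<^sub>1 x \<noteq> parity T\<^sub>2 x)) r"
      using T(3) by (simp add: T_eq)
    then have "irregular_across m r C H\<^sub>1 H\<^sub>2"
      by (rule irregular_acrossI[rotated 5]) (use 3 in \<open>auto simp: S_T\<^sub>1_T\<^sub>2_def\<close>)
    then show False using assms(8) by contradiction
  qed
qed

lemma replace_top_degree:
  assumes "is_factor m d H" "P \<in> H"
    and "rank_le m (pdeg P - 1) (\<lambda>x. peval P x \<noteq> h x) r" "determined m B h" "B \<subseteq> X \<union> (H - {P})"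
  shows "\<exists>H'. is_factor m d H' \<and> H' \<inter> X = {} \<and> deg_profile H' < deg_profile H \<and>
    card H' \<le> card H + r \<and> (\<forall>Q\<in>X \<union> H. determined m (X \<union> H') (peval Q))"
proof -
  have "pdeg P \<le> d" using assms(1,2) by (simp add: is_factor_def)
  then obtain A where A: "is_factor m d A" "card A \<le> r" "\<forall>Q\<in>A. pdeg Q < pdeg P"
    "determined m (B \<union> A) (peval P)"
    using determined_by_lower_degree[OF assms(3,4)] by blast
  define H' where "H' = (H - {P} \<union> A) - X"
  have XH': "X \<union> H' = X \<union> (H - {P}) \<union> A" by (auto simp: H'_def)
  have "is_factor m d H'"
    using is_factor_Un[OF is_factor_subset[OF assms(1)] A(1)] by (rule is_factor_subset) (auto simp: H'_def)
  moreover have "deg_profile H' < deg_profile H"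
    using is_factor_finite[OF assms(1)] is_factor_finite[OF A(1)] assms(2) A(3)
    by (rule deg_profile_replace_less) (auto simp: H'_def)
  moreover have "card H' \<le> card H + r"
  proof -
    have "card H' \<le> card (H - {P} \<union> A)"
      unfolding H'_def using is_factor_finite[OF assms(1)] is_factor_finite[OF A(1)]
      by (intro card_mono) auto
    also have "\<dots> \<le> card (H - {P}) + card A" by (rule card_Un_le)
    finally show ?thesis using A(2) card_Diff1_le[of H P] by linarith
  qed
  moreover have "determined m (X \<union> H') (peval Q)" if "Q \<in> X \<union> H" for Q
  proof (cases "Q = P")
    case True
    have "B \<union> A \<subseteq> X \<union> H'" using assms(5) XH' by auto
    then show ?thesis using determined_mono[OF _ A(4)] True by blast
  next
    case False
    then show ?thesis using that XH' by (intro determined_peval) auto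
  qed
  ultimately show ?thesis by (auto simp: H'_def)
qed

lemma irregular_reduce:
  assumes "is_factor m d C" "irregular m r C"
  shows "\<exists>C'. is_factor m d C' \<and> deg_profile C' < deg_profile C \<and> card C' \<le> card C + r \<and>
    (\<forall>Q\<in>C. determined m C' (peval Q))"
proof -
  obtain T where T: "T \<subseteq> C" "T \<noteq> {}" "rank_le m (maxdeg T - 1) (parity T) r"
    using assms(2) unfolding irregular_def by blast
  have fT: "finite T" using is_factor_finite[OF assms(1)] T(1) finite_subset by blast
  obtain P where P: "P \<in> T" "pdeg P = maxdeg T" using maxdeg_attained[OF fT T(2)] by blast
  have "parity T = (\<lambda>x. peval P x \<noteq> parity (T - {P}) x)"
    using parity_remove[OF fT P(1)] by auto
  then have "rank_le m (pdeg P - 1) (\<lambda>x. peval P x \<noteq> parity (T - {P}) x) r" using T(3) P(2) by simp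
  from replace_top_degree[OF assms(1) _ this determined_parity, of "{}"] show ?thesis
    using P(1) T(1) by auto
qed

lemma rank_le_parity_drop_lower:
  assumes "finite S" "is_factor m d D" "D \<noteq> {}" "\<forall>P\<in>D. pdeg P < maxdeg (S \<union> D)"
    and "rank_le m (maxdeg (S \<union> D) - 1) (\<lambda>x. parity S x \<noteq> parity D x) r"
  shows "S \<noteq> {} \<and> rank_le m (maxdeg S - 1) (parity S) (r + card D)"
proof -
  have fin: "finite (S \<union> D)" using assms(1) is_factor_finite[OF assms(2)] by simp
  obtain P where P: "P \<in> S \<union> D" "pdeg P = maxdeg (S \<union> D)" using maxdeg_attained[OF fin] assms(3) by blast
  then have "P \<in> S" using assms(4) by auto
  then have S_max: "maxdeg S = maxdeg (S \<union> D)"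
    using P(2) maxdeg_attained[OF assms(1)] pdeg_le_maxdeg[OF assms(1)] pdeg_le_maxdeg[OF fin]
    by (metis Un_iff empty_iff le_antisym)
  have "is_factor m (maxdeg S - 1) D" using assms(2,4) S_max by (auto simp: is_factor_def)
  then show ?thesis
    using rank_le_xor_absorb[OF _ determined_parity] assms(5) S_max \<open>P \<in> S\<close> by auto
qed

lemma petal_reduce:
  assumes "is_factor m d Y" "is_factor m d H" "S \<subseteq> X" "S \<subseteq> Y" "D \<subseteq> H" "D \<noteq> {}" "card H \<le> b"
    and "rank_le m (maxdeg (S \<union> D) - 1) (\<lambda>x. parity S x \<noteq> parity D x) r"
    and "\<not> irregular m (r + b) Y"
  shows "\<exists>H'. is_factor m d H' \<and> H' \<inter> X = {} \<and> deg_profile H' < deg_profile H \<and>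
    card H' \<le> card H + r \<and> (\<forall>Q\<in>X \<union> H. determined m (X \<union> H') (peval Q))"
proof (cases "\<exists>P\<in>D. pdeg P = maxdeg (S \<union> D)")
  case True
  then obtain P where P: "P \<in> D" "pdeg P = maxdeg (S \<union> D)" by blast
  have fD: "finite D" using is_factor_finite[OF assms(2)] assms(5) finite_subset by blast
  have "(\<lambda>x. parity S x \<noteq> parity D x) = (\<lambda>x. peval P x \<noteq> (parity S x \<noteq> parity (D - {P}) x))"
    using parity_remove[OF fD P(1)] by auto
  then have "rank_le m (pdeg P - 1) (\<lambda>x. peval P x \<noteq> (parity S x \<noteq> parity (D - {P}) x)) r"
    using assms(8) P(2) by simp
  from replace_top_degree[OF assms(2) _ this determined_xor[OF determined_parity determined_parity]]
  show ?thesis using P(1) assms(3,5) by blast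
next
  case False
  have S: "is_factor m d S" and D: "is_factor m d D"
    using is_factor_subset assms(1,2,4,5) by blast+
  have "\<forall>P\<in>D. pdeg P < maxdeg (S \<union> D)"
    using False pdeg_le_maxdeg[of "S \<union> D"] is_factor_finite[OF S] is_factor_finite[OF D]
    by (metis Un_iff finite_Un le_neq_implies_less)
  from rank_le_parity_drop_lower[OF is_factor_finite[OF S] D assms(6) this assms(8)]
  have "S \<noteq> {}" "rank_le m (maxdeg S - 1) (parity S) (r + b)"
    using rank_le_mono card_mono[OF is_factor_finite[OF assms(2)] assms(5)] assms(7) by auto
  then have "irregular m (r + b) Y" using assms(4) unfolding irregular_def by blast
  then show ?thesis using assms(9) by blast
qed

section \<open>Combinatorial tools\<close>

lemma finite_common_bound:
  fixes P :: "'a \<Rightarrow> 'b::linorder \<Rightarrow> bool"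
  assumes "finite S" "\<And>s. s \<in> S \<Longrightarrow> \<exists>b. P s b" "\<And>s b b'. P s b \<Longrightarrow> b \<le> b' \<Longrightarrow> P s b'"
  shows "\<exists>b. \<forall>s\<in>S. P s b"
  using assms(1,2)
proof (induction S rule: finite_induct)
  case (insert s S)
  obtain b where "\<forall>s\<in>S. P s b" using insert.IH insert.prems by blast
  moreover obtain b' where "P s b'" using insert.prems by blast
  ultimately show ?case using assms(3) by (intro exI[of _ "max b b'"]) (auto intro: max.cobounded1 max.cobounded2)
qed simp

lemma independent_set_greedy:
  fixes E :: "'a \<Rightarrow> 'a \<Rightarrow> bool"
  assumes "finite V" "\<And>u v. E u v \<Longrightarrow> E v u" "\<forall>v\<in>V. card {u\<in>V. E v u} < q"
  shows "\<exists>S\<subseteq>V. (\<forall>u\<in>S. \<forall>v\<in>S. u \<noteq> v \<longrightarrow> \<not> E u v) \<and> card V \<le> q * card S"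
  using assms(1,3)
proof (induction "card V" arbitrary: V rule: less_induct)
  case less
  show ?case
  proof (cases "V = {}")
    case False
    then obtain v where v: "v \<in> V" by blast
    define N where "N = insert v {u\<in>V. E v u}"
    have N: "N \<subseteq> V" "card N \<le> q"
      using v less.prems card_insert_le[of "{u\<in>V. E v u}" v] by (auto simp: N_def card_insert_if)
    have fin: "finite (V - N)" using less.prems(1) by blast
    have "card (V - N) < card V" using v less.prems(1) by (intro psubset_card_mono) (auto simp: N_def)
    moreover have "card {u\<in>V - N. E w u} \<le> card {u\<in>V. E w u}" for w
      using less.prems(1) by (intro card_mono) auto
    then have "\<forall>w\<in>V - N. card {u\<in>V - N. E w u} < q"
      using less.prems(2) by (meson DiffD1 le_less_trans)
    ultimately obtain S where S: "S \<subseteq> V - N" "\<forall>u\<in>S. \<forall>w\<in>S. u \<noteq> w \<longrightarrow> \<not> E u w"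
      "card (V - N) \<le> q * card S"
      using less.hyps[OF _ fin] by blast
    have "finite S" using S(1) fin finite_subset by blast
    have "v \<notin> S" using S(1) by (auto simp: N_def)
    have no_edge: "\<not> E v u \<and> \<not> E u v" if "u \<in> S" for u
      using that S(1) assms(2) by (auto simp: N_def)
    have "card V \<le> card (V - N) + card N"
      using card_Diff_subset[OF finite_subset[OF N(1) less.prems(1)] N(1)] card_mono[OF less.prems(1) N(1)]
      by linarith
    also have "\<dots> \<le> q * card (insert v S)"
      using S(3) N(2) \<open>finite S\<close> \<open>v \<notin> S\<close> by simp
    finally have "card V \<le> q * card (insert v S)" .
    moreover have "insert v S \<subseteq> V" using S(1) v by blast
    moreover have "\<forall>u\<in>insert v S. \<forall>w\<in>insert v S. u \<noteq> w \<longrightarrow> \<not> E u w"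
      using S(2) no_edge by blast
    ultimately show ?thesis by blast
  qed simp
qed

lemma pigeonhole_fiber:
  assumes "finite N" "finite Y" "Y \<noteq> {}" "\<forall>x\<in>N. g x \<in> Y"
  shows "\<exists>y\<in>Y. card N \<le> card Y * card {x\<in>N. g x = y}"
proof -
  define k where "k y = card {x\<in>N. g x = y}" for y
  have "Max (k ` Y) \<in> k ` Y" using assms(2,3) by (intro Max_in) auto
  then obtain y where y: "y \<in> Y" "k y = Max (k ` Y)" by auto
  have "N = (\<Union>y\<in>Y. {x\<in>N. g x = y})" using assms(4) by auto
  then have "card N \<le> (\<Sum>y\<in>Y. k y)"
    unfolding k_def using card_UN_le[OF assms(2), of "\<lambda>y. {x\<in>N. g x = y}"] by simp
  also have "\<dots> \<le> card Y * k y"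
    using sum_bounded_above[of Y k "k y"] assms(2) y(2) by simp
  finally show ?thesis using y(1) by (auto simp: k_def)
qed

section \<open>Regularity lemma\<close>

definition has_regular_refinement :: "nat \<Rightarrow> nat \<Rightarrow> (nat \<Rightarrow> nat) \<Rightarrow> nat \<Rightarrow> poly2 set \<Rightarrow> bool" where
  "has_regular_refinement m d f R G \<longleftrightarrow> (\<exists>G'. is_factor m d G' \<and> card G' \<le> R \<and> f_regular m f G' \<and>
    (\<forall>Q\<in>G. determined m G' (peval Q)))"

lemma has_regular_refinement_mono:
  "has_regular_refinement m d f R G \<Longrightarrow> R \<le> R' \<Longrightarrow> has_regular_refinement m d f R' G"
  unfolding has_regular_refinement_def by fastforce

text \<open>By induction on the degree profile: an irregular factor is replaced by one of smaller
  profile and of size bounded in terms of the old size, and only finitely many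
  profiles are bounded in size and degree.\<close>

lemma regular_refinement_of_profile:
  "\<exists>R. \<forall>m G. is_factor m d G \<and> deg_profile G = M \<longrightarrow> has_regular_refinement m d f R G"
proof (induction M rule: less_induct)
  case (less M)
  define b where "b = size M + f (size M)"
  have "finite ({M'. M' < M} \<inter> bounded_msets d b)" using finite_bounded_msets by blast
  then have "\<exists>R. \<forall>M'\<in>{M'. M' < M} \<inter> bounded_msets d b.
      \<forall>m G. is_factor m d G \<and> deg_profile G = M' \<longrightarrow> has_regular_refinement m d f R G"
    by (rule finite_common_bound) (use less has_regular_refinement_mono in blast)+
  then obtain R where R: "\<And>m G. is_factor m d G \<Longrightarrow> deg_profile G < M \<Longrightarrow> card G \<le> b \<Longrightarrow>
      has_regular_refinement m d f R G"
    using deg_profile_in_bounded_msets by blast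
  have "has_regular_refinement m d f (max (size M) R) G"
    if G: "is_factor m d G" "deg_profile G = M" for m G
  proof (cases "f_regular m f G")
    case True
    have "card G = size M" using G size_deg_profile[OF is_factor_finite[OF G(1)]] by simp
    then show ?thesis
      using G(1) True determined_peval unfolding has_regular_refinement_def
      by (intro exI[of _ G]) auto
  next
    case False
    have "card G = size M" using G size_deg_profile[OF is_factor_finite[OF G(1)]] by simp
    then obtain G' where G': "is_factor m d G'" "deg_profile G' < M" "card G' \<le> b"
      "\<forall>Q\<in>G. determined m G' (peval Q)"
      using irregular_reduce[OF G(1) irregular_if_not_f_regular[OF G(1) False]] G(2)
      unfolding b_def by metis
    obtain G'' where "is_factor m d G''" "card G'' \<le> R" "f_regular m f G''"
      "\<forall>Q\<in>G'. determined m G'' (peval Q)"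
      using R[OF G'(1-3)] unfolding has_regular_refinement_def by blast
    then show ?thesis
      using G'(4) determined_trans unfolding has_regular_refinement_def
      by (intro exI[of _ G'']) auto
  qed
  then show ?case by blast
qed

lemma regular_refinement:
  "\<exists>R. \<forall>m G. is_factor m d G \<and> card G \<le> b \<longrightarrow> has_regular_refinement m d f R G"
proof -
  have "\<exists>R. \<forall>M\<in>bounded_msets d b.
      \<forall>m G. is_factor m d G \<and> deg_profile G = M \<longrightarrow> has_regular_refinement m d f R G"
    by (rule finite_common_bound[OF finite_bounded_msets])
      (use regular_refinement_of_profile has_regular_refinement_mono in blast)+
  then obtain R where R: "\<And>m G. is_factor m d G \<Longrightarrow> deg_profile G \<in> bounded_msets d b \<Longrightarrow>
      has_regular_refinement m d f R G"
    by blast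
  show ?thesis
  proof (intro exI[of _ R] allI impI)
    fix m G assume "is_factor m d G \<and> card G \<le> b"
    then show "has_regular_refinement m d f R G" using R deg_profile_in_bounded_msets by blast
  qed
qed

section \<open>Sunflowers of a core and petals\<close>

definition core_petals ::
    "nat \<Rightarrow> nat \<Rightarrow> poly2 set \<Rightarrow> (nat \<Rightarrow> poly2 set) \<Rightarrow> nat set \<Rightarrow> (nat \<Rightarrow> poly2 set) \<Rightarrow> bool" where
  "core_petals m d C H I F \<longleftrightarrow> finite I \<and> is_factor m d C \<and>
    (\<forall>i\<in>I. is_factor m d (H i) \<and> H i \<inter> C = {} \<and> (\<forall>P\<in>F i. determined m (C \<union> H i) (peval P)))"

definition regular_sunflower ::
    "(nat \<Rightarrow> nat) \<Rightarrow> nat \<Rightarrow> nat \<Rightarrow> nat set \<Rightarrow> (nat \<Rightarrow> poly2 set) \<Rightarrow> real \<Rightarrow> nat \<Rightarrow> bool" where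
  "regular_sunflower f d m I F e K \<longleftrightarrow> (\<exists>J G. J \<subseteq> I \<and> real (card I) powr e \<le> real (card J) \<and>
    (\<forall>i\<in>J. is_factor m d (G i) \<and> card (G i) \<le> K \<and> (\<forall>P\<in>F i. determined m (G i) (peval P))) \<and>
    (\<forall>i\<in>J. \<forall>j\<in>J. f_regular m f (G i \<union> G j)) \<and>
    (\<forall>i\<in>J. \<forall>j\<in>J. i \<noteq> j \<longrightarrow> G i \<inter> G j = \<Inter> (G ` J)))"

lemma real_powr_le_self:
  assumes "e \<le> 1"
  shows "real n powr e \<le> real n"
proof (cases "n = 0")
  case False
  then have "real n powr e \<le> real n powr 1" using assms by (intro powr_mono) auto
  then show ?thesis using False by simp
qed simp

lemma regular_sunflowerE:
  assumes "regular_sunflower f d m I F e K"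
  obtains J G where "J \<subseteq> I" "real (card I) powr e \<le> real (card J)"
    "\<forall>i\<in>J. is_factor m d (G i) \<and> card (G i) \<le> K \<and> (\<forall>P\<in>F i. determined m (G i) (peval P))"
    "\<forall>i\<in>J. \<forall>j\<in>J. f_regular m f (G i \<union> G j)" "\<forall>i\<in>J. \<forall>j\<in>J. i \<noteq> j \<longrightarrow> G i \<inter> G j = \<Inter> (G ` J)"
  using assms unfolding regular_sunflower_def by (elim exE conjE) (rule that; assumption)

lemma regular_sunflower_mono:
  assumes "regular_sunflower f d m I F e K" "e' \<le> e" "K \<le> K'"
  shows "regular_sunflower f d m I F e' K'"
proof -
  obtain J G where JG: "J \<subseteq> I" "real (card I) powr e \<le> real (card J)"
    "\<forall>i\<in>J. is_factor m d (G i) \<and> card (G i) \<le> K \<and> (\<forall>P\<in>F i. determined m (G i) (peval P))"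
    "\<forall>i\<in>J. \<forall>j\<in>J. f_regular m f (G i \<union> G j)" "\<forall>i\<in>J. \<forall>j\<in>J. i \<noteq> j \<longrightarrow> G i \<inter> G j = \<Inter> (G ` J)"
    using assms(1) by (rule regular_sunflowerE)
  have "real (card I) powr e' \<le> real (card I) powr e"
    using assms(2) by (cases "card I = 0") (auto intro: powr_mono)
  then have "real (card I) powr e' \<le> real (card J)" using JG(2) by linarith
  then show ?thesis
    using JG(1,3-5) assms(3) unfolding regular_sunflower_def
    by (intro exI[of _ J] exI[of _ G]) (auto intro: order_trans)
qed

lemma regular_sunflower_of_subfamily:
  assumes "regular_sunflower f d m J F e K" "J \<subseteq> I" "real (card I) powr (1/4) \<le> real (card J)" "0 \<le> e"
  shows "regular_sunflower f d m I F (e / 4) K"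
proof -
  obtain J' G where JG: "J' \<subseteq> J" "real (card J) powr e \<le> real (card J')"
    "\<forall>i\<in>J'. is_factor m d (G i) \<and> card (G i) \<le> K \<and> (\<forall>P\<in>F i. determined m (G i) (peval P))"
    "\<forall>i\<in>J'. \<forall>j\<in>J'. f_regular m f (G i \<union> G j)" "\<forall>i\<in>J'. \<forall>j\<in>J'. i \<noteq> j \<longrightarrow> G i \<inter> G j = \<Inter> (G ` J')"
    using assms(1) by (rule regular_sunflowerE)
  have "real (card I) powr (e / 4) = (real (card I) powr (1/4)) powr e" by (simp add: powr_powr)
  also have "\<dots> \<le> real (card J) powr e" using assms(3,4) by (intro powr_mono2) auto
  also have "\<dots> \<le> real (card J')" by (rule JG(2))
  finally have "real (card I) powr (e / 4) \<le> real (card J')" .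
  moreover have "J' \<subseteq> I" using JG(1) assms(2) by blast
  ultimately show ?thesis
    using JG(3-5) unfolding regular_sunflower_def by blast
qed

lemma regular_sunflower_small_family:
  assumes "core_petals m d C H I F" "\<forall>i\<in>I. card (H i) \<le> b" "card C + card I * b \<le> B"
    and "\<forall>m G. is_factor m d G \<and> card G \<le> B \<longrightarrow> has_regular_refinement m d f K G" "e \<le> 1"
  shows "regular_sunflower f d m I F e K"
proof -
  have C: "is_factor m d C" and H: "\<forall>i\<in>I. is_factor m d (H i)" and "finite I"
    using assms(1) unfolding core_petals_def by blast+
  have "card (\<Union>i\<in>I. H i) \<le> (\<Sum>i\<in>I. card (H i))" by (rule card_UN_le[OF \<open>finite I\<close>])
  also have "\<dots> \<le> card I * b" using sum_bounded_above[of I "\<lambda>i. card (H i)" b] assms(2) by simp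
  finally have "card (C \<union> (\<Union>i\<in>I. H i)) \<le> B" using card_Un_le[of C "\<Union>i\<in>I. H i"] assms(3) by linarith
  then obtain G where G: "is_factor m d G" "card G \<le> K" "f_regular m f G"
    "\<forall>Q\<in>C \<union> (\<Union>i\<in>I. H i). determined m G (peval Q)"
    using assms(4) is_factor_Un[OF C is_factor_UN[OF \<open>finite I\<close> H]]
    unfolding has_regular_refinement_def by blast
  have "\<forall>P\<in>F i. determined m G (peval P)" if i: "i \<in> I" for i
  proof
    fix P assume "P \<in> F i"
    then have "determined m (C \<union> H i) (peval P)" using assms(1) i unfolding core_petals_def by blast
    moreover have "\<forall>Q\<in>C \<union> H i. determined m G (peval Q)" using G(4) i by blast
    ultimately show "determined m G (peval P)" by (rule determined_trans)
  qed
  moreover have "real (card I) powr e \<le> real (card I)" using assms(5) by (rule real_powr_le_self)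
  ultimately show ?thesis
    using G(1-3) unfolding regular_sunflower_def by (intro exI[of _ I] exI[of _ "\<lambda>_. G"]) auto
qed

lemma core_petals_replace:
  assumes "core_petals m d C H I F" "J \<subseteq> I" "is_factor m d C'"
    and "\<forall>i\<in>J. is_factor m d (H' i) \<and> H' i \<inter> C' = {} \<and>
      (\<forall>Q\<in>C \<union> H i. determined m (C' \<union> H' i) (peval Q))"
  shows "core_petals m d C' H' J F"
  unfolding core_petals_def
proof (intro conjI ballI)
  show "finite J" using assms(1,2) finite_subset unfolding core_petals_def by blast
  fix i assume i: "i \<in> J"
  show "is_factor m d (H' i)" "H' i \<inter> C' = {}" using assms(4) i by blast+
  fix P assume "P \<in> F i"
  then have "determined m (C \<union> H i) (peval P)" using assms(1,2) i unfolding core_petals_def by blast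
  then show "determined m (C' \<union> H' i) (peval P)" using assms(4) i determined_trans by blast
qed (use assms(3) in blast)

text \<open>Pairs are ordered lexicographically, so a step may enlarge the core as long as it
  shrinks the degree profile of every petal it keeps.\<close>

definition reduced_core_petals ::
    "nat \<Rightarrow> nat \<Rightarrow> (nat \<Rightarrow> poly2 set) \<Rightarrow> poly2 set \<Rightarrow> (nat \<Rightarrow> poly2 set) \<Rightarrow> nat set \<Rightarrow> nat \<Rightarrow> nat \<Rightarrow> bool" where
  "reduced_core_petals m d F C H I c b \<longleftrightarrow> (\<exists>J C' H'. J \<subseteq> I \<and>
    real (card I) powr (1/4) \<le> real (card J) \<and> core_petals m d C' H' J F \<and> card C' \<le> c \<and>
    (\<forall>i\<in>J. card (H' i) \<le> b \<and> (deg_profile (H' i), deg_profile C') < (deg_profile (H i), deg_profile C)))"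

lemma reduced_core_petals_mono:
  "reduced_core_petals m d F C H I c b \<Longrightarrow> c \<le> c' \<Longrightarrow> b \<le> b' \<Longrightarrow> reduced_core_petals m d F C H I c' b'"
  unfolding reduced_core_petals_def by (meson order_trans)

lemma core_reduce_step:
  assumes "core_petals m d C H I F" "\<forall>i\<in>I. card (H i) \<le> b" "irregular m r C"
  shows "reduced_core_petals m d F C H I (card C + r) b"
proof -
  have C: "is_factor m d C" using assms(1) unfolding core_petals_def by blast
  obtain C' where C': "is_factor m d C'" "deg_profile C' < deg_profile C" "card C' \<le> card C + r"
    "\<forall>Q\<in>C. determined m C' (peval Q)"
    using irregular_reduce[OF C assms(3)] by blast
  define H' where "H' i = H i - C'" for i
  have petal: "is_factor m d (H' i) \<and> H' i \<inter> C' = {} \<and>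
      (\<forall>Q\<in>C \<union> H i. determined m (C' \<union> H' i) (peval Q)) \<and>
      card (H' i) \<le> b \<and> (deg_profile (H' i), deg_profile C') < (deg_profile (H i), deg_profile C)"
    if i: "i \<in> I" for i
  proof -
    have Hi: "is_factor m d (H i)" using assms(1) i unfolding core_petals_def by blast
    have sub: "H' i \<subseteq> H i" by (auto simp: H'_def)
    have "determined m (C' \<union> H' i) (peval Q)" if "Q \<in> C \<union> H i" for Q
    proof (cases "Q \<in> C")
      case True
      then show ?thesis using C'(4) determined_mono[of C' "C' \<union> H' i"] by blast
    next
      case False
      then have "Q \<in> C' \<union> H' i" using that by (auto simp: H'_def)
      then show ?thesis by (rule determined_peval)
    qed
    moreover have "deg_profile (H' i) \<le> deg_profile (H i)"
      using is_factor_finite[OF Hi] sub by (rule deg_profile_mono)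
    then have "(deg_profile (H' i), deg_profile C') < (deg_profile (H i), deg_profile C)"
      using C'(2) by simp
    moreover have "card (H' i) \<le> b"
      using assms(2) i card_mono[OF is_factor_finite[OF Hi] sub] by fastforce
    moreover have "is_factor m d (H' i)" using Hi sub by (rule is_factor_subset)
    moreover have "H' i \<inter> C' = {}" by (auto simp: H'_def)
    ultimately show ?thesis by blast
  qed
  have "core_petals m d C' H' I F"
    by (rule core_petals_replace[OF assms(1) order_refl C'(1)]) (use petal in blast)
  moreover have "real (card I) powr (1/4) \<le> real (card I)" by (rule real_powr_le_self) simp
  ultimately show ?thesis
    using C'(3) petal unfolding reduced_core_petals_def
    by (intro exI[of _ I] exI[of _ C'] exI[of _ H']) simp
qed

lemma irregular_with_reduce:
  assumes "is_factor m d C" "is_factor m d H" "H \<inter> C = {}" "card H \<le> b"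
    and "\<not> irregular m (r + b) C" "irregular_with m r C H"
  shows "\<exists>H'. is_factor m d H' \<and> H' \<inter> C = {} \<and> deg_profile H' < deg_profile H \<and>
    card H' \<le> card H + r \<and> (\<forall>Q\<in>C \<union> H. determined m (C \<union> H') (peval Q))"
proof -
  obtain S T where T: "S \<subseteq> C" "T \<subseteq> H" "T \<noteq> {}"
    "rank_le m (maxdeg (S \<union> T) - 1) (parity (S \<union> T)) r"
    using assms(6) unfolding irregular_with_def by blast
  have "finite S" "finite T"
    using T(1,2) is_factor_finite[OF assms(1)] is_factor_finite[OF assms(2)] finite_subset by blast+
  moreover have "S \<inter> T = {}" using T(1,2) assms(3) by blast
  ultimately have "parity (S \<union> T) = (\<lambda>x. parity S x \<noteq> parity T x)"
    by (intro ext parity_Un)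
  then show ?thesis
    using petal_reduce[OF assms(1,2) T(1) T(1) T(2,3) assms(4) _ assms(5)] T(4) by simp
qed

lemma irregular_across_reduce:
  assumes "is_factor m d C" "is_factor m d H\<^sub>0" "is_factor m d H" "H\<^sub>0 \<inter> C = {}" "card H \<le> b"
    and "\<not> irregular m (r + b) (C \<union> H\<^sub>0)"
    and "S \<subseteq> C" "U \<subseteq> H\<^sub>0" "T \<subseteq> H" "T \<noteq> {}"
    and "rank_le m (maxdeg (S \<union> U \<union> T) - 1) (\<lambda>x. parity S x \<noteq> (parity U x \<noteq> parity T x)) r"
  shows "\<exists>H'. is_factor m d H' \<and> H' \<inter> (C \<union> U) = {} \<and> deg_profile H' < deg_profile H \<and>
    card H' \<le> card H + r \<and> (\<forall>Q\<in>C \<union> U \<union> H. determined m (C \<union> U \<union> H') (peval Q))"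
proof -
  have "finite S" "finite U"
    using assms(7,8) is_factor_finite[OF assms(1)] is_factor_finite[OF assms(2)] finite_subset by blast+
  moreover have "S \<inter> U = {}" using assms(4,7,8) by blast
  ultimately have "parity (S \<union> U) x \<longleftrightarrow> parity S x \<noteq> parity U x" for x
    by (rule parity_Un)
  then have "(\<lambda>x. parity (S \<union> U) x \<noteq> parity T x) = (\<lambda>x. parity S x \<noteq> (parity U x \<noteq> parity T x))"
    by auto
  then have "rank_le m (maxdeg ((S \<union> U) \<union> T) - 1) (\<lambda>x. parity (S \<union> U) x \<noteq> parity T x) r"
    using assms(11) by (simp only:)
  moreover have "S \<union> U \<subseteq> C \<union> U" "S \<union> U \<subseteq> C \<union> H\<^sub>0" using assms(7,8) by auto
  ultimately show ?thesis
    by (rule petal_reduce[OF is_factor_Un[OF assms(1,2)] assms(3) _ _ assms(9,10,5) _ assms(6), rotated 2])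
qed

lemma reduced_core_petals_if_petals_shrink:
  assumes "core_petals m d C H I F" "J \<subseteq> I" "real (card I) powr (1/4) \<le> real (card J)"
    and "is_factor m d C'" "C \<subseteq> C'" "card C' \<le> c"
    and "\<forall>i\<in>J. \<exists>H'. is_factor m d H' \<and> H' \<inter> C' = {} \<and> deg_profile H' < deg_profile (H i) \<and>
      card H' \<le> b \<and> (\<forall>Q\<in>C' \<union> H i. determined m (C' \<union> H') (peval Q))"
  shows "reduced_core_petals m d F C H I c b"
proof -
  from assms(7) obtain H' where H': "\<forall>i\<in>J. is_factor m d (H' i) \<and> H' i \<inter> C' = {} \<and>
      deg_profile (H' i) < deg_profile (H i) \<and> card (H' i) \<le> b \<and>
      (\<forall>Q\<in>C' \<union> H i. determined m (C' \<union> H' i) (peval Q))"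
    by (rule bchoice[THEN exE])
  have "core_petals m d C' H' J F"
    by (rule core_petals_replace[OF assms(1,2,4)]) (use H' assms(5) in blast)
  moreover have "card (H' i) \<le> b \<and> (deg_profile (H' i), deg_profile C') < (deg_profile (H i), deg_profile C)"
    if "i \<in> J" for i
    using H' that by simp
  ultimately show ?thesis
    using assms(2,3,6) unfolding reduced_core_petals_def by blast
qed

lemma petals_reduce_step:
  assumes "core_petals m d C H I F" "\<forall>i\<in>I. card (H i) \<le> b" "\<not> irregular m (r + b) C"
    and "J \<subseteq> I" "\<forall>i\<in>J. irregular_with m r C (H i)" "real (card I) powr (1/4) \<le> real (card J)"
  shows "reduced_core_petals m d F C H I (card C) (b + r)"
proof -
  have C: "is_factor m d C" using assms(1) unfolding core_petals_def by blast
  show ?thesis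
  proof (rule reduced_core_petals_if_petals_shrink[OF assms(1,4,6) C order_refl order_refl], intro ballI)
    fix i assume "i \<in> J"
    then have "i \<in> I" "irregular_with m r C (H i)" using assms(4,5) by blast+
    then have Hi: "is_factor m d (H i)" "H i \<inter> C = {}" "card (H i) \<le> b"
      and irr: "irregular_with m r C (H i)"
      using assms(1,2) unfolding core_petals_def by blast+
    from irregular_with_reduce[OF C Hi assms(3) irr] show "\<exists>H'. is_factor m d H' \<and> H' \<inter> C = {} \<and>
        deg_profile H' < deg_profile (H i) \<and> card H' \<le> b + r \<and>
        (\<forall>Q\<in>C \<union> H i. determined m (C \<union> H') (peval Q))"
      using Hi(3) by fastforce
  qed
qed

lemma irregular_across_common_part:
  assumes "finite N" "finite H\<^sub>0" "\<forall>j\<in>N. irregular_across m r C H\<^sub>0 (H j)"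
  obtains U N\<^sub>0 where "U \<subseteq> H\<^sub>0" "N\<^sub>0 \<subseteq> N" "card N \<le> 2 ^ card H\<^sub>0 * card N\<^sub>0"
    "\<forall>j\<in>N\<^sub>0. \<exists>S T. S \<subseteq> C \<and> T \<subseteq> H j \<and> T \<noteq> {} \<and>
      rank_le m (maxdeg (S \<union> U \<union> T) - 1) (\<lambda>x. parity S x \<noteq> (parity U x \<noteq> parity T x)) r"
proof -
  have "\<forall>j\<in>N. \<exists>U. U \<subseteq> H\<^sub>0 \<and> (\<exists>S T. S \<subseteq> C \<and> T \<subseteq> H j \<and> T \<noteq> {} \<and>
      rank_le m (maxdeg (S \<union> U \<union> T) - 1) (\<lambda>x. parity S x \<noteq> (parity U x \<noteq> parity T x)) r)"
  proof
    fix j assume "j \<in> N"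
    then have "irregular_across m r C H\<^sub>0 (H j)" using assms(3) by blast
    then obtain S U T where ST: "S \<subseteq> C" "U \<subseteq> H\<^sub>0" "T \<subseteq> H j" "T \<noteq> {}"
      "rank_le m (maxdeg (S \<union> U \<union> T) - 1) (\<lambda>x. parity S x \<noteq> (parity U x \<noteq> parity T x)) r"
      unfolding irregular_across_def by blast
    show "\<exists>U. U \<subseteq> H\<^sub>0 \<and> (\<exists>S T. S \<subseteq> C \<and> T \<subseteq> H j \<and> T \<noteq> {} \<and>
        rank_le m (maxdeg (S \<union> U \<union> T) - 1) (\<lambda>x. parity S x \<noteq> (parity U x \<noteq> parity T x)) r)"
      by (rule exI[of _ U], rule conjI[OF ST(2)]) (use ST(1,3-5) in blast)
  qed
  then obtain W where W: "\<forall>j\<in>N. W j \<subseteq> H\<^sub>0 \<and> (\<exists>S T. S \<subseteq> C \<and> T \<subseteq> H j \<and> T \<noteq> {} \<and>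
      rank_le m (maxdeg (S \<union> W j \<union> T) - 1) (\<lambda>x. parity S x \<noteq> (parity (W j) x \<noteq> parity T x)) r)"
    by (rule bchoice[THEN exE])
  have "\<forall>j\<in>N. W j \<in> Pow H\<^sub>0" using W by blast
  then obtain U where U: "U \<in> Pow H\<^sub>0" "card N \<le> card (Pow H\<^sub>0) * card {j\<in>N. W j = U}"
    using pigeonhole_fiber[of N "Pow H\<^sub>0" W] assms(1,2) by blast
  show ?thesis
  proof (rule that[of U "{j\<in>N. W j = U}"])
    show "card N \<le> 2 ^ card H\<^sub>0 * card {j\<in>N. W j = U}" using U(2) assms(2) by (simp add: card_Pow)
    show "\<forall>j\<in>{j\<in>N. W j = U}. \<exists>S T. S \<subseteq> C \<and> T \<subseteq> H j \<and> T \<noteq> {} \<and>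
        rank_le m (maxdeg (S \<union> U \<union> T) - 1) (\<lambda>x. parity S x \<noteq> (parity U x \<noteq> parity T x)) r"
      using W by blast
  qed (use U(1) in auto)
qed

text \<open>The petals failing together with \<open>H i\<^sub>0\<close> do so through subsets of \<open>H i\<^sub>0\<close>; the most
  frequent such subset \<open>U\<close> joins the core, which makes each of these petals fail with the core.\<close>

lemma high_degree_reduce_step:
  assumes "core_petals m d C H I F" "\<forall>i\<in>I. card (H i) \<le> b"
    and "i\<^sub>0 \<in> I" "\<not> irregular m (r + b) (C \<union> H i\<^sub>0)"
    and "N \<subseteq> I" "\<forall>j\<in>N. irregular_across m r C (H i\<^sub>0) (H j)"
    and "2 ^ b * real (card I) powr (1/4) \<le> real (card N)"
  shows "reduced_core_petals m d F C H I (card C + b) (b + r)"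
proof -
  have C: "is_factor m d C" and H: "\<And>i. i \<in> I \<Longrightarrow> is_factor m d (H i) \<and> H i \<inter> C = {}"
    and finI: "finite I" using assms(1) unfolding core_petals_def by blast+
  have finH\<^sub>0: "finite (H i\<^sub>0)" using H[OF assms(3)] is_factor_finite by blast
  obtain U N\<^sub>0 where U: "U \<subseteq> H i\<^sub>0" "N\<^sub>0 \<subseteq> N" "card N \<le> 2 ^ card (H i\<^sub>0) * card N\<^sub>0"
    and ST: "\<forall>j\<in>N\<^sub>0. \<exists>S T. S \<subseteq> C \<and> T \<subseteq> H j \<and> T \<noteq> {} \<and>
      rank_le m (maxdeg (S \<union> U \<union> T) - 1) (\<lambda>x. parity S x \<noteq> (parity U x \<noteq> parity T x)) r"
    using irregular_across_common_part[OF finite_subset[OF assms(5) finI] finH\<^sub>0 assms(6)] by blast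
  have "(2::nat) ^ card (H i\<^sub>0) \<le> 2 ^ b" using assms(2,3) by (simp add: power_increasing)
  then have "2 ^ card (H i\<^sub>0) * card N\<^sub>0 \<le> 2 ^ b * card N\<^sub>0" by (rule mult_le_mono1)
  with U(3) have "card N \<le> 2 ^ b * card N\<^sub>0" by (rule le_trans)
  then have "real (card N) \<le> 2 ^ b * real (card N\<^sub>0)" using of_nat_mono by fastforce
  then have "2 ^ b * real (card I) powr (1/4) \<le> 2 ^ b * real (card N\<^sub>0)" using assms(7) by linarith
  then have large: "real (card I) powr (1/4) \<le> real (card N\<^sub>0)" by (rule mult_left_le_imp_le) simp
  have H\<^sub>0: "is_factor m d (H i\<^sub>0)" "card (H i\<^sub>0) \<le> b" using H[OF assms(3)] assms(2,3) by blast+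
  have CU: "is_factor m d (C \<union> U)" using is_factor_Un[OF C is_factor_subset[OF H\<^sub>0(1) U(1)]] .
  have cardCU: "card (C \<union> U) \<le> card C + b" using card_Un_le[of C U] card_mono[OF finH\<^sub>0 U(1)] H\<^sub>0(2) by linarith
  have "N\<^sub>0 \<subseteq> I" using U(2) assms(5) by blast
  show ?thesis
  proof (rule reduced_core_petals_if_petals_shrink[OF assms(1) \<open>N\<^sub>0 \<subseteq> I\<close> large CU Un_upper1 cardCU],
      intro ballI)
    fix j assume "j \<in> N\<^sub>0"
    from bspec[OF ST this] obtain S T where ST: "S \<subseteq> C" "T \<subseteq> H j" "T \<noteq> {}"
      "rank_le m (maxdeg (S \<union> U \<union> T) - 1) (\<lambda>x. parity S x \<noteq> (parity U x \<noteq> parity T x)) r"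
      by (elim exE conjE)
    have "j \<in> I" using \<open>j \<in> N\<^sub>0\<close> \<open>N\<^sub>0 \<subseteq> I\<close> by blast
    then have Hj: "is_factor m d (H j)" "card (H j) \<le> b" using H assms(2) by blast+
    have "H i\<^sub>0 \<inter> C = {}" using H[OF assms(3)] by blast
    from irregular_across_reduce[OF C H\<^sub>0(1) Hj(1) this Hj(2) assms(4) ST(1) U(1) ST(2-4)]
    show "\<exists>H'. is_factor m d H' \<and> H' \<inter> (C \<union> U) = {} \<and> deg_profile H' < deg_profile (H j) \<and>
        card H' \<le> b + r \<and> (\<forall>Q\<in>C \<union> U \<union> H j. determined m (C \<union> U \<union> H') (peval Q))"
      using Hj(2) by fastforce
  qed
qed

lemma independent_petals_sunflower:
  assumes "mono f" "core_petals m d C H I F" "\<forall>i\<in>I. card (H i) \<le> b" "f (card C + 2 * b) \<le> r"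
    and "\<not> irregular m r C" "S \<subseteq> I" "\<forall>i\<in>S. \<not> irregular_with m r C (H i)"
    and "\<forall>i\<in>S. \<forall>j\<in>S. i \<noteq> j \<longrightarrow> \<not> irregular_across m r C (H i) (H j)"
    and "real (card I) powr (1/4) \<le> real (card S)"
  shows "regular_sunflower f d m I F (1/4) (card C + b)"
proof -
  have C: "is_factor m d C" and H: "\<And>i. i \<in> I \<Longrightarrow> is_factor m d (H i) \<and> H i \<inter> C = {}"
    using assms(2) unfolding core_petals_def by blast+
  have single: "\<not> irregular m r (C \<union> H i)" if "i \<in> S" for i
    using not_irregular_Un assms(5,7) that by blast
  have small: "f (card (C \<union> H i \<union> H j)) \<le> r" if "i \<in> S" "j \<in> S" for i j
  proof -
    have "card (H i) \<le> b" "card (H j) \<le> b" using assms(3,6) that by auto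
    then have "card (C \<union> H i \<union> H j) \<le> card C + 2 * b"
      using card_Un_le[of "C \<union> H i" "H j"] card_Un_le[of C "H i"] by linarith
    then show ?thesis using monoD[OF assms(1)] assms(4) order_trans by blast
  qed
  have "f_regular m f ((C \<union> H i) \<union> (C \<union> H j))" if ij: "i \<in> S" "j \<in> S" for i j
  proof (cases "i = j")
    case True
    then show ?thesis
      using f_regular_if_not_irregular[OF is_factor_Un[OF C] _ single] small[OF ij] H ij assms(6) by auto
  next
    case False
    have "C \<union> H i \<union> (C \<union> H j) = C \<union> H i \<union> H j" by blast
    moreover have "is_factor m d (C \<union> H i \<union> H j)" using C H ij assms(6) by (auto intro: is_factor_Un)
    moreover have "\<not> irregular m r (C \<union> H i \<union> H j)"
      using not_irregular_Un_Un[OF C, of "H i" "H j"] H single ij assms(6,8) False by blast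
    ultimately show ?thesis using f_regular_if_not_irregular small[OF ij] by metis
  qed
  moreover have "(C \<union> H i) \<inter> (C \<union> H j) = (\<Inter>k\<in>S. C \<union> H k)" if ij: "i \<in> S" "j \<in> S" "i \<noteq> j" for i j
  proof -
    have "H i \<inter> H j = {}" using disjoint_if_not_irregular_across assms(8) ij by blast
    then show ?thesis using ij by blast
  qed
  moreover have "is_factor m d (C \<union> H i)" "\<forall>P\<in>F i. determined m (C \<union> H i) (peval P)"
    "card (C \<union> H i) \<le> card C + b" if "i \<in> S" for i
    using assms(2,3,6) that card_Un_le[of C "H i"] is_factor_Un[OF C] unfolding core_petals_def
    by fastforce+
  ultimately show ?thesis
    using assms(6,9) unfolding regular_sunflower_def
    by (intro exI[of _ S] exI[of _ "\<lambda>i. C \<union> H i"]) auto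
qed

lemma quarter_root_bounds:
  assumes "256 * 16 ^ b \<le> s"
  shows "(real s powr (1/4)) ^ 4 = real s" "4 * 2 ^ b \<le> real s powr (1/4)" "4 \<le> real s powr (1/4)"
proof -
  have "s \<noteq> 0" using assms by (metis le_0_eq mult_is_0 power_not_zero zero_neq_numeral)
  then show v4: "(real s powr (1/4)) ^ 4 = real s" by (simp add: powr_power)
  have "((2::real) ^ b) ^ 4 = (2 ^ 4) ^ b" by (simp only: power_mult[symmetric] mult.commute)
  then have "(4 * 2 ^ b :: real) ^ 4 = 256 * 16 ^ b" by (simp add: power_mult_distrib)
  also have "\<dots> \<le> real s" using assms by (metis of_nat_le_iff of_nat_mult of_nat_numeral of_nat_power)
  finally have "(4 * 2 ^ b) ^ Suc 3 \<le> (real s powr (1/4)) ^ Suc 3" using v4 by simp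
  then show v: "4 * 2 ^ b \<le> real s powr (1/4)" by (rule power_le_imp_le_base) simp
  have "(1::real) \<le> 2 ^ b" by simp
  with v show "4 \<le> real s powr (1/4)" by linarith
qed

lemma quartic_le_imp_le:
  fixes v q s :: real
  assumes "4 \<le> v" "v ^ 4 \<le> 2 * (q * s)" "q \<le> v\<^sup>2 + 1" "0 \<le> s"
  shows "v \<le> s"
proof -
  have "16 \<le> v\<^sup>2" using power_mono[OF assms(1), of 2] by simp
  then have "q * s \<le> (2 * v\<^sup>2) * s" using assms(3,4) by (intro mult_right_mono) auto
  moreover have "v ^ 4 = v\<^sup>2 * v\<^sup>2" by (simp flip: power_add)
  ultimately have "v\<^sup>2 * v\<^sup>2 \<le> v\<^sup>2 * (4 * s)" using assms(2) by (simp add: algebra_simps)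
  then have "v\<^sup>2 \<le> 4 * s" by (rule mult_left_le_imp_le) (use \<open>16 \<le> v\<^sup>2\<close> in linarith)
  moreover have "4 * v \<le> v\<^sup>2" using assms(1) by (simp add: power2_eq_square mult_right_mono)
  ultimately show ?thesis by linarith
qed

lemma quarter_root_le_if_half:
  assumes "256 * 16 ^ b \<le> s" "s \<le> 2 * k"
  shows "real s powr (1/4) \<le> real k"
proof (rule quartic_le_imp_le[where q = 1])
  have "real s \<le> real (2 * k)" using assms(2) by (rule of_nat_mono)
  then show "(real s powr (1/4)) ^ 4 \<le> 2 * (1 * real k)"
    using quarter_root_bounds(1)[OF assms(1)] by simp
qed (use quarter_root_bounds(3)[OF assms(1)] in simp_all)

lemma real_nat_ceiling_bounds: "0 \<le> x \<Longrightarrow> x \<le> real (nat \<lceil>x\<rceil>) \<and> real (nat \<lceil>x\<rceil>) \<le> x + 1"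
  using of_int_ceiling_le_add_one[of x] by linarith

lemma good_petals_step:
  assumes "mono f" "core_petals m d C H I F" "\<forall>i\<in>I. card (H i) \<le> b" "256 * 16 ^ b \<le> card I"
    and "f (card C + 2 * b) \<le> r" "\<not> irregular m (r + b) C"
    and "V \<subseteq> I" "card I \<le> 2 * card V" "\<forall>i\<in>V. \<not> irregular_with m (r + b) C (H i)"
  shows "reduced_core_petals m d F C H I (card C + b) (b + r) \<or>
    regular_sunflower f d m I F (1/4) (card C + b)"
proof -
  define v where "v = real (card I) powr (1/4)"
  have v: "v ^ 4 = real (card I)" "4 * 2 ^ b \<le> v" "4 \<le> v"
    using quarter_root_bounds[OF assms(4)] unfolding v_def by simp_all
  have "0 \<le> v\<^sup>2" by simp
  then obtain q :: nat where q: "v\<^sup>2 \<le> q" "q \<le> v\<^sup>2 + 1" using real_nat_ceiling_bounds by blast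
  have finV: "finite V" using assms(2,7) finite_subset unfolding core_petals_def by blast
  define E where "E i j \<longleftrightarrow> i \<noteq> j \<and> irregular_across m r C (H i) (H j)" for i j
  show ?thesis
  proof (cases "\<forall>i\<in>V. card {j\<in>V. E i j} < q")
    case True
    have "\<And>i j. E i j \<Longrightarrow> E j i" unfolding E_def using irregular_across_sym by blast
    then obtain S where S: "S \<subseteq> V" "\<forall>i\<in>S. \<forall>j\<in>S. i \<noteq> j \<longrightarrow> \<not> E i j" "card V \<le> q * card S"
      using independent_set_greedy[OF finV _ True] by blast
    have "v ^ 4 \<le> 2 * (real q * real (card S))"
      using assms(8) S(3) v(1) by (metis of_nat_le_iff of_nat_mult of_nat_numeral order_trans mult_le_mono2)
    then have "v \<le> real (card S)" using quartic_le_imp_le[OF v(3) _ q(2)] by simp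
    moreover have "\<not> irregular m r C" using assms(6) irregular_mono le_add1 by blast
    moreover have "\<forall>i\<in>S. \<not> irregular_with m r C (H i)"
      using assms(9) S(1) irregular_with_mono le_add1 by blast
    ultimately show ?thesis
      using independent_petals_sunflower[OF assms(1,2,3,5)] S(1,2) assms(7) unfolding E_def v_def
      by (meson order_trans)
  next
    case False
    then obtain i\<^sub>0 where i\<^sub>0: "i\<^sub>0 \<in> V" "q \<le> card {j\<in>V. E i\<^sub>0 j}" by (auto simp: not_less)
    have "2 ^ b * v \<le> v\<^sup>2" using v(2,3) by (simp add: power2_eq_square mult_right_mono)
    then have "2 ^ b * v \<le> real (card {j\<in>V. E i\<^sub>0 j})" using q(1) i\<^sub>0(2) by linarith
    moreover have "\<not> irregular m (r + b) (C \<union> H i\<^sub>0)"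
      using not_irregular_Un assms(6,9) i\<^sub>0(1) by blast
    ultimately have "reduced_core_petals m d F C H I (card C + b) (b + r)"
      using high_degree_reduce_step[OF assms(2,3), of i\<^sub>0 r "{j\<in>V. E i\<^sub>0 j}"] assms(7) i\<^sub>0(1)
      unfolding E_def v_def by blast
    then show ?thesis ..
  qed
qed

lemma sunflower_step:
  assumes "mono f" "core_petals m d C H I F" "\<forall>i\<in>I. card (H i) \<le> b" "256 * 16 ^ b \<le> card I"
    and "f (card C + 2 * b) \<le> r"
  shows "reduced_core_petals m d F C H I (card C + r + 2 * b) (2 * b + r) \<or>
    regular_sunflower f d m I F (1/4) (card C + b)"
proof (cases "irregular m (r + 2 * b) C")
  case True
  have "reduced_core_petals m d F C H I (card C + (r + 2 * b)) b"
    by (rule core_reduce_step[OF assms(2,3) True])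
  then have "reduced_core_petals m d F C H I (card C + r + 2 * b) (2 * b + r)"
    by (rule reduced_core_petals_mono) simp_all
  then show ?thesis ..
next
  case core: False
  define Bad where "Bad = {i\<in>I. irregular_with m (r + b) C (H i)}"
  have BadI: "Bad \<subseteq> I" by (auto simp: Bad_def)
  show ?thesis
  proof (cases "card I \<le> 2 * card Bad")
    case True
    have "real (card I) powr (1/4) \<le> real (card Bad)" by (rule quarter_root_le_if_half[OF assms(4) True])
    moreover have "\<not> irregular m (r + b + b) C" using core by (simp add: add.assoc mult_2)
    moreover have "\<forall>i\<in>Bad. irregular_with m (r + b) C (H i)" by (simp add: Bad_def)
    ultimately have "reduced_core_petals m d F C H I (card C) (b + (r + b))"
      using petals_reduce_step[OF assms(2,3) _ BadI] by blast
    then have "reduced_core_petals m d F C H I (card C + r + 2 * b) (2 * b + r)"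
      by (rule reduced_core_petals_mono) simp_all
    then show ?thesis ..
  next
    case False
    have "\<not> irregular m (r + b) C" using core irregular_mono[of m "r + b" C "r + 2 * b"] by auto
    moreover have "finite I" using assms(2) unfolding core_petals_def by blast
    then have "card (I - Bad) = card I - card Bad" "card Bad \<le> card I"
      using card_Diff_subset[OF finite_subset[OF BadI] BadI] card_mono[OF _ BadI] by simp_all
    then have "card I \<le> 2 * card (I - Bad)" using False by linarith
    moreover have "\<forall>i\<in>I - Bad. \<not> irregular_with m (r + b) C (H i)" by (simp add: Bad_def)
    ultimately have "reduced_core_petals m d F C H I (card C + b) (b + r) \<or>
        regular_sunflower f d m I F (1/4) (card C + b)"
      by (rule good_petals_step[OF assms(1-5) _ Diff_subset])
    moreover have "reduced_core_petals m d F C H I (card C + r + 2 * b) (2 * b + r)"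
      if "reduced_core_petals m d F C H I (card C + b) (b + r)"
      using that by (rule reduced_core_petals_mono) simp_all
    ultimately show ?thesis by blast
  qed
qed

section \<open>Induction on degree profiles\<close>

text \<open>A single parameter \<open>n\<close> governs both the exponent \<open>4\<^sup>-\<^sup>n\<close> and the size bound, so that
  bounds obtained for finitely many smaller profiles combine by taking a maximum.\<close>

definition sunflower_bound ::
    "(nat \<Rightarrow> nat) \<Rightarrow> nat \<Rightarrow> nat multiset \<times> nat multiset \<Rightarrow> nat \<Rightarrow> nat \<Rightarrow> nat \<Rightarrow> bool" where
  "sunflower_bound f d \<mu> c b n \<longleftrightarrow> (\<forall>m C H I F. core_petals m d C H I F \<and> card C \<le> c \<and>
    (\<forall>i\<in>I. card (H i) \<le> b \<and> (deg_profile (H i), deg_profile C) \<le> \<mu>) \<longrightarrow>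
    regular_sunflower f d m I F (1 / 4 ^ n) n)"

lemma inverse_power4_antimono: "k \<le> n \<Longrightarrow> 1 / 4 ^ n \<le> (1 / 4 ^ k :: real)"
  by (rule frac_le) (simp_all add: power_increasing)

lemma sunflower_bound_mono:
  assumes "sunflower_bound f d \<mu> c b n" "n \<le> n'"
  shows "sunflower_bound f d \<mu> c b n'"
proof -
  have "1 / 4 ^ n' \<le> (1 / 4 ^ n :: real)" using assms(2) by (rule inverse_power4_antimono)
  then show ?thesis using assms unfolding sunflower_bound_def by (meson regular_sunflower_mono)
qed

lemma regular_sunflower_if_reduced:
  assumes "reduced_core_petals m d F C H I c b"
    and "\<forall>i\<in>I. (deg_profile (H i), deg_profile C) \<le> \<mu>"
    and "\<forall>\<mu>'\<in>{\<mu>'. \<mu>' < \<mu>} \<inter> bounded_msets d b \<times> bounded_msets d c. sunflower_bound f d \<mu>' c b n"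
  shows "regular_sunflower f d m I F (1 / 4 ^ Suc n) n"
proof -
  obtain J C' H' where J: "J \<subseteq> I" "real (card I) powr (1/4) \<le> real (card J)"
    and CH': "core_petals m d C' H' J F" "card C' \<le> c"
    and H': "\<forall>i\<in>J. card (H' i) \<le> b \<and> (deg_profile (H' i), deg_profile C') < (deg_profile (H i), deg_profile C)"
    using assms(1) unfolding reduced_core_petals_def by blast
  have "regular_sunflower f d m J F (1 / 4 ^ n) n"
  proof (cases "J = {}")
    case True
    then show ?thesis unfolding regular_sunflower_def by (intro exI[of _ "{}"]) simp
  next
    case False
    have "finite J" using CH'(1) unfolding core_petals_def by blast
    define \<mu>' where "\<mu>' = Max ((\<lambda>j. (deg_profile (H' j), deg_profile C')) ` J)"
    have "\<mu>' \<in> (\<lambda>j. (deg_profile (H' j), deg_profile C')) ` J"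
      unfolding \<mu>'_def using \<open>finite J\<close> False by (intro Max_in) auto
    then obtain i where i: "i \<in> J" "\<mu>' = (deg_profile (H' i), deg_profile C')" by blast
    have "\<mu>' < \<mu>" using H' i J(1) assms(2) by (metis order_less_le_trans subsetD)
    moreover have "\<mu>' \<in> bounded_msets d b \<times> bounded_msets d c"
      using CH' H' i deg_profile_in_bounded_msets unfolding core_petals_def by auto
    ultimately have "sunflower_bound f d \<mu>' c b n" using assms(3) by blast
    moreover have "(deg_profile (H' j), deg_profile C') \<le> \<mu>'" if "j \<in> J" for j
      unfolding \<mu>'_def using \<open>finite J\<close> that by (intro Max_ge) auto
    ultimately show ?thesis using CH' H' unfolding sunflower_bound_def by blast
  qed
  from regular_sunflower_of_subfamily[OF this J] show ?thesis by (simp add: mult.commute)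
qed

lemma sunflower_bound_step:
  assumes "mono f" "core_petals m d C H I F" "card C \<le> c"
    and "\<forall>i\<in>I. card (H i) \<le> b \<and> (deg_profile (H i), deg_profile C) \<le> \<mu>" "256 * 16 ^ b \<le> card I"
    and "r = f (c + 2 * b)"
    and "\<forall>\<mu>'\<in>{\<mu>'. \<mu>' < \<mu>} \<inter> bounded_msets d (2 * b + r) \<times> bounded_msets d (c + r + 2 * b).
      sunflower_bound f d \<mu>' (c + r + 2 * b) (2 * b + r) n"
  shows "regular_sunflower f d m I F (1 / 4 ^ Suc n) (max n (c + b))"
proof -
  have "f (card C + 2 * b) \<le> r" using assms(3,6) monoD[OF assms(1)] by simp
  moreover have "\<forall>i\<in>I. card (H i) \<le> b" using assms(4) by blast
  ultimately have "reduced_core_petals m d F C H I (card C + r + 2 * b) (2 * b + r) \<or>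
      regular_sunflower f d m I F (1/4) (card C + b)"
    using sunflower_step[OF assms(1,2) _ assms(5)] by blast
  then show ?thesis
  proof
    assume "reduced_core_petals m d F C H I (card C + r + 2 * b) (2 * b + r)"
    then have "reduced_core_petals m d F C H I (c + r + 2 * b) (2 * b + r)"
      by (rule reduced_core_petals_mono) (use assms(3) in simp_all)
    then have "regular_sunflower f d m I F (1 / 4 ^ Suc n) n"
      by (rule regular_sunflower_if_reduced) (use assms(4,7) in auto)
    then show ?thesis by (rule regular_sunflower_mono) simp_all
  next
    assume "regular_sunflower f d m I F (1/4) (card C + b)"
    then show ?thesis
      by (rule regular_sunflower_mono) (use inverse_power4_antimono[of 1 "Suc n"] assms(3) in simp_all)
  qed
qed

lemma sunflower_bound_exists:
  assumes "mono f"
  shows "\<exists>n. sunflower_bound f d \<mu> c b n"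
proof (induction \<mu> arbitrary: c b rule: less_induct)
  case (less \<mu>)
  define r where "r = f (c + 2 * b)"
  define S where "S = {\<mu>'. \<mu>' < \<mu>} \<inter> bounded_msets d (2 * b + r) \<times> bounded_msets d (c + r + 2 * b)"
  have "finite S" unfolding S_def using finite_bounded_msets by blast
  then have "\<exists>n. \<forall>\<mu>'\<in>S. sunflower_bound f d \<mu>' (c + r + 2 * b) (2 * b + r) n"
    by (rule finite_common_bound) (use less sunflower_bound_mono in \<open>auto simp: S_def\<close>)
  then obtain n\<^sub>1 where n\<^sub>1: "\<forall>\<mu>'\<in>S. sunflower_bound f d \<mu>' (c + r + 2 * b) (2 * b + r) n\<^sub>1" ..
  obtain R where R: "\<forall>m G. is_factor m d G \<and> card G \<le> c + 256 * 16 ^ b * b \<longrightarrow>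
      has_regular_refinement m d f R G"
    using regular_refinement by blast
  define n where "n = Suc n\<^sub>1 + c + b + R"
  have "regular_sunflower f d m I F (1 / 4 ^ n) n"
    if st: "core_petals m d C H I F" "card C \<le> c"
      "\<forall>i\<in>I. card (H i) \<le> b \<and> (deg_profile (H i), deg_profile C) \<le> \<mu>"
    for m C H I F
  proof (cases "card I < 256 * 16 ^ b")
    case True
    then have "card C + card I * b \<le> c + 256 * 16 ^ b * b"
      using mult_le_mono1[OF less_imp_le[OF True], of b] st(2) by linarith
    moreover have "\<forall>i\<in>I. card (H i) \<le> b" using st(3) by blast
    ultimately have "regular_sunflower f d m I F (1 / 4 ^ n) R"
      using regular_sunflower_small_family[OF st(1) _ _ R] inverse_power4_antimono[of 0 n] by simp
    then show ?thesis by (rule regular_sunflower_mono) (simp_all add: n_def)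
  next
    case False
    then have "256 * 16 ^ b \<le> card I" by simp
    with n\<^sub>1 have "regular_sunflower f d m I F (1 / 4 ^ Suc n\<^sub>1) (max n\<^sub>1 (c + b))"
      unfolding S_def by (rule sunflower_bound_step[OF assms st _ r_def, rotated])
    then show ?thesis
      by (rule regular_sunflower_mono) (use inverse_power4_antimono[of "Suc n\<^sub>1" n] in \<open>simp_all add: n_def\<close>)
  qed
  then show ?case unfolding sunflower_bound_def by blast
qed

lemma indexed_sunflower_if_regular_sunflower:
  assumes "regular_sunflower f d m {..<n} F e K"
  shows "\<exists>w \<pi> G. inj_on \<pi> {..<w} \<and> \<pi> ` {..<w} \<subseteq> {..<n} \<and> real n powr e \<le> real w \<and>
    (\<forall>i<w. is_factor m d (G i) \<and> refines m (G i) (F (\<pi> i)) \<and> card (G i) \<le> K) \<and>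
    (\<forall>i<w. \<forall>j<w. f_regular m f (G i \<union> G j)) \<and> sunflower w G"
proof -
  obtain J G where J: "J \<subseteq> {..<n}" "real (card {..<n}) powr e \<le> real (card J)"
    and G: "\<forall>i\<in>J. is_factor m d (G i) \<and> card (G i) \<le> K \<and> (\<forall>P\<in>F i. determined m (G i) (peval P))"
      "\<forall>i\<in>J. \<forall>j\<in>J. f_regular m f (G i \<union> G j)" "\<forall>i\<in>J. \<forall>j\<in>J. i \<noteq> j \<longrightarrow> G i \<inter> G j = \<Inter> (G ` J)"
    using assms by (rule regular_sunflowerE)
  obtain \<pi> where \<pi>: "bij_betw \<pi> {..<card J} J"
    using ex_bij_betw_nat_finite[OF finite_subset[OF J(1)]] by (auto simp: atLeast0LessThan)
  then have inj: "inj_on \<pi> {..<card J}" and img: "\<pi> ` {..<card J} = J" by (auto simp: bij_betw_def)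
  have \<pi>J: "\<pi> i \<in> J" if "i < card J" for i using img that by blast
  have "(\<Inter>k\<in>{..<card J}. (G \<circ> \<pi>) k) = \<Inter> (G ` \<pi> ` {..<card J})" by (simp add: image_comp)
  then have Inter: "(\<Inter>k\<in>{..<card J}. (G \<circ> \<pi>) k) = \<Inter> (G ` J)" by (simp only: img)
  have sf: "sunflower (card J) (G \<circ> \<pi>)"
    unfolding sunflower_def
  proof (intro allI impI)
    fix i j assume ij: "i < card J" "j < card J" "i \<noteq> j"
    then have "\<pi> i \<noteq> \<pi> j" using inj_on_eq_iff[OF inj] by simp
    then show "(G \<circ> \<pi>) i \<inter> (G \<circ> \<pi>) j = (\<Inter>k\<in>{..<card J}. (G \<circ> \<pi>) k)"
      using G(3) \<pi>J ij Inter by simp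
  qed
  show ?thesis
  proof (intro exI[of _ "card J"] exI[of _ \<pi>] exI[of _ "G \<circ> \<pi>"] conjI allI impI)
    show "inj_on \<pi> {..<card J}" "sunflower (card J) (G \<circ> \<pi>)" by (fact inj sf)+
    show "\<pi> ` {..<card J} \<subseteq> {..<n}" using img J(1) by simp
    show "real n powr e \<le> real (card J)" using J(2) by simp
    fix i assume "i < card J"
    then have i: "\<pi> i \<in> J" by (rule \<pi>J)
    show "is_factor m d ((G \<circ> \<pi>) i)" "card ((G \<circ> \<pi>) i) \<le> K" using G(1) i by simp_all
    show "refines m ((G \<circ> \<pi>) i) (F (\<pi> i))" using G(1) i refines_if_determined by simp
    fix j assume "j < card J"
    then show "f_regular m f ((G \<circ> \<pi>) i \<union> (G \<circ> \<pi>) j)" using G(2) i \<pi>J by simp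
  qed
qed

theorem theorem5p2:
  fixes f :: "nat \<Rightarrow> nat" and K d :: nat
  assumes "growth_function f" and "K > 0" and "d > 0"
  shows "\<exists>\<epsilon>::real. \<epsilon> > 0 \<and> (\<exists>K'::nat.
    \<forall>(m::nat) (n::nat) (F :: nat \<Rightarrow> poly2 set).
      (\<forall>i<n. is_factor m d (F i) \<and> card (F i) \<le> K) \<longrightarrow>
      (\<exists>(w::nat) (\<pi>::nat \<Rightarrow> nat) (G :: nat \<Rightarrow> poly2 set).
         inj_on \<pi> {..<w} \<and> \<pi> ` {..<w} \<subseteq> {..<n} \<and>
         real w \<ge> real n powr \<epsilon> \<and>
         (\<forall>i<w. is_factor m d (G i) \<and> refines m (G i) (F (\<pi> i)) \<and> card (G i) \<le> K') \<and>
         (\<forall>i<w. \<forall>j<w. f_regular m f (G i \<union> G j)) \<and>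
         sunflower w G))"
proof -
  have "mono f" using assms(1) by (simp add: growth_function_def)
  define M where "M = Max (bounded_msets d K)"
  obtain k where k: "sunflower_bound f d (M, {#}) 0 K k"
    using sunflower_bound_exists[OF \<open>mono f\<close>] by blast
  have "regular_sunflower f d m {..<n} F (1 / 4 ^ k) k"
    if F: "\<forall>i<n. is_factor m d (F i) \<and> card (F i) \<le> K" for m n F
  proof -
    have "core_petals m d {} F {..<n} F"
      using F determined_peval unfolding core_petals_def is_factor_def by auto
    moreover have "\<forall>i\<in>{..<n}. card (F i) \<le> K \<and> (deg_profile (F i), deg_profile {}) \<le> (M, {#})"
    proof
      fix i assume "i \<in> {..<n}"
      then have "card (F i) \<le> K" "deg_profile (F i) \<in> bounded_msets d K"
        using F deg_profile_in_bounded_msets by auto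
      then show "card (F i) \<le> K \<and> (deg_profile (F i), deg_profile {}) \<le> (M, {#})"
        unfolding M_def using finite_bounded_msets by (simp add: deg_profile_def)
    qed
    ultimately show ?thesis
      using k[unfolded sunflower_bound_def, rule_format, of m "{}" F "{..<n}" F] by simp
  qed
  then show ?thesis
    by (intro exI[of _ "1 / 4 ^ k"] conjI exI[of _ k] allI impI indexed_sunflower_if_regular_sunflower)
      simp_all
qed

end
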